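(* Let $K\subset\mathbb{R}^n$ be a nonempty compact set, let $\mathcal{F}=\{Q_1,\dots,Q_s\}$ be a finite family of $i$-dimensional linear subspaces of $\mathbb{R}^n$, where $1\le i\le n-1$, and let $\{H_m\}_{m\in\mathbb{N}}$ be a sequence of elements of $\mathcal{F}$. Then the sequence \[K_m:=M_{H_m}\cdots M_{H_1}K\] converges in the Hausdorff metric to a compact convex set $L$, which is also the Hausdorff limit of $M_{H_m}\cdots M_{H_1}\mathrm{conv}(K)$. Moreover, $L$ is symmetric with respect to every $Q_j\in\mathcal{F}$ appearing infinitely often in $\{H_m\}$ (i.e. $R_{Q_j}L=L$).
   Context: For a linear subspace $H$, $R_Hx=2(x|H)-x$ is the reflection with respect to $H$ ($x|H$ the orthogonal projection). The Minkowski symmetrization is $M_HC:=\frac12(C+R_HC)$, with $X+Y=\{x+y:x\in X,y\in Y\}$ and $tX=\{tx:x\in X\}$. $\mathrm{conv}$ denotes convex hull. *)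

theory Defs
  imports "HOL-Analysis.Analysis"
begin

definition orth_proj :: "'a::euclidean_space set \<Rightarrow> 'a \<Rightarrow> 'a" where
  "orth_proj H x = (THE y. y \<in> H \<and> (\<forall>h\<in>H. (x - y) \<bullet> h = 0))"

definition refl_sub :: "'a::euclidean_space set \<Rightarrow> 'a \<Rightarrow> 'a" where
  "refl_sub H x = 2 *\<^sub>R orth_proj H x - x"

definition msum :: "'a::real_vector set \<Rightarrow> 'a set \<Rightarrow> 'a set" where
  "msum X Y = {x + y | x y. x \<in> X \<and> y \<in> Y}"

definition minkowski_sym :: "'a::euclidean_space set \<Rightarrow> 'a set \<Rightarrow> 'a set" where
  "minkowski_sym H C = (\<lambda>z. (1/2::real) *\<^sub>R z) ` msum C (refl_sub H ` C)"

primrec sym_iter :: "(nat \<Rightarrow> 'a::euclidean_space set) \<Rightarrow> nat \<Rightarrow> 'a set \<Rightarrow> 'a set" where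
  "sym_iter H 0 C = C"
| "sym_iter H (Suc m) C = minkowski_sym (H m) (sym_iter H m C)"

text \<open>Hausdorff distance (meaningful for nonempty bounded sets).\<close>
definition hausdorff_dist :: "'a::metric_space set \<Rightarrow> 'a set \<Rightarrow> real" where
  "hausdorff_dist S T = max (SUP x\<in>S. setdist {x} T) (SUP y\<in>T. setdist {y} S)"

end

theory Submission
  imports Defs
begin

text \<open>Minkowski symmetrization acts linearly on support functions,
  h(M_Q C, u) = (h(C, u) + h(C, R_Q u)) / 2, so the energy of C, the integral of h(C, u)^2 over the
  unit ball, drops by one quarter of the integral of (h(C, u) - h(C, R_Q u))^2: strictly unless C is
  symmetric with respect to Q. The iterates of a convex body stay in a fixed ball, so by Blaschke
  selection a subsequence converges to some L; comparing energies shows that L is symmetric for every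
  subspace used infinitely often. As M_Q is 1-Lipschitz for the Hausdorff distance and fixes
  Q-symmetric convex sets, the distance of the iterates to L is eventually nonincreasing, so the
  whole sequence converges. For a general K, every point of the m-th iterate of conv K is the mean
  of a distribution on the m-th iterate of K with variance at most 4 R^2 / 2^m, so both sequences
  have the same limit.\<close>

section \<open>Orthogonal projection and reflection\<close>

lemma orth_proj_ex1:
  fixes Q :: "'a::euclidean_space set"
  assumes "subspace Q"
  shows "\<exists>!y. y \<in> Q \<and> (\<forall>h\<in>Q. (x - y) \<bullet> h = 0)"
proof -
  obtain y z where y: "y \<in> span Q" and z: "\<And>w. w \<in> span Q \<Longrightarrow> orthogonal z w"
    and xyz: "x = y + z"
    using orthogonal_subspace_decomp_exists[of Q x] by metis
  have yQ: "y \<in> Q" using y assms by (metis span_eq_iff)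
  have orth: "(x - y) \<bullet> h = 0" if "h \<in> Q" for h
    using z xyz that by (auto simp: orthogonal_def span_base)
  have "y' = y" if "y' \<in> Q" "\<forall>h\<in>Q. (x - y') \<bullet> h = 0" for y'
  proof -
    have "y - y' \<in> Q" using yQ that(1) assms by (simp add: subspace_diff)
    then have "(x - y') \<bullet> (y - y') = 0" "(x - y) \<bullet> (y - y') = 0"
      using that orth by auto
    then have "(y - y') \<bullet> (y - y') = 0" by (simp add: inner_diff_left)
    then show ?thesis by simp
  qed
  with yQ orth show ?thesis by blast
qed

lemma orth_proj_in: "subspace Q \<Longrightarrow> orth_proj Q x \<in> Q"
  unfolding orth_proj_def using theI'[OF orth_proj_ex1] by blast

lemma orth_proj_orthogonal: "subspace Q \<Longrightarrow> h \<in> Q \<Longrightarrow> (x - orth_proj Q x) \<bullet> h = 0"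
  unfolding orth_proj_def using theI'[OF orth_proj_ex1] by blast

lemma orth_proj_eqI:
  "subspace Q \<Longrightarrow> y \<in> Q \<Longrightarrow> (\<And>h. h \<in> Q \<Longrightarrow> (x - y) \<bullet> h = 0) \<Longrightarrow> orth_proj Q x = y"
  unfolding orth_proj_def using the1_equality[OF orth_proj_ex1] by blast

lemma linear_orth_proj:
  assumes Q: "subspace Q"
  shows "linear (orth_proj Q)"
proof
  fix x y
  show "orth_proj Q (x + y) = orth_proj Q x + orth_proj Q y"
    using orth_proj_orthogonal[OF Q, of _ x] orth_proj_orthogonal[OF Q, of _ y]
    by (intro orth_proj_eqI[OF Q] subspace_add[OF Q] orth_proj_in[OF Q])
      (simp add: algebra_simps inner_diff_left inner_add_left)
next
  fix c :: real and x
  show "orth_proj Q (c *\<^sub>R x) = c *\<^sub>R orth_proj Q x"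
    using orth_proj_orthogonal[OF Q, of _ x]
    by (intro orth_proj_eqI[OF Q] subspace_scale[OF Q] orth_proj_in[OF Q])
      (simp flip: scaleR_diff_right)
qed

lemma orth_proj_inner_commute:
  assumes Q: "subspace Q"
  shows "orth_proj Q x \<bullet> y = x \<bullet> orth_proj Q y"
proof -
  have "(y - orth_proj Q y) \<bullet> orth_proj Q x = 0" "(x - orth_proj Q x) \<bullet> orth_proj Q y = 0"
    by (simp_all add: orth_proj_orthogonal[OF Q] orth_proj_in[OF Q])
  then show ?thesis by (simp add: inner_diff_left inner_diff_right inner_commute)
qed

lemma orth_proj_idem: "subspace Q \<Longrightarrow> orth_proj Q (orth_proj Q x) = orth_proj Q x"
  by (rule orth_proj_eqI) (auto simp: orth_proj_in)

lemma linear_refl_sub: "subspace Q \<Longrightarrow> linear (refl_sub Q)"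
  using linear_orth_proj[of Q] unfolding refl_sub_def
  by (intro linearI) (simp_all add: linear_add linear_scale algebra_simps)

lemma refl_sub_inner_commute: "subspace Q \<Longrightarrow> refl_sub Q x \<bullet> y = x \<bullet> refl_sub Q y"
  unfolding refl_sub_def by (simp add: inner_diff_left inner_diff_right orth_proj_inner_commute)

lemma refl_sub_refl_sub [simp]:
  assumes Q: "subspace Q"
  shows "refl_sub Q (refl_sub Q x) = x"
  using linear_orth_proj[OF Q] unfolding refl_sub_def
  by (simp add: linear_diff linear_scale orth_proj_idem[OF Q] algebra_simps flip: scaleR_add_left)

lemma norm_refl_sub [simp]: "subspace Q \<Longrightarrow> norm (refl_sub Q x) = norm x"
  using refl_sub_inner_commute[of Q x "refl_sub Q x"] by (simp add: norm_eq_sqrt_inner)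

lemma dist_refl_sub [simp]: "subspace Q \<Longrightarrow> dist (refl_sub Q x) (refl_sub Q y) = dist x y"
  using linear_refl_sub[of Q] by (simp add: dist_norm flip: linear_diff)

lemma orthogonal_transformation_refl_sub: "subspace Q \<Longrightarrow> orthogonal_transformation (refl_sub Q)"
  by (simp add: orthogonal_transformation linear_refl_sub)

lemma refl_sub_image_subset_iff:
  "subspace Q \<Longrightarrow> refl_sub Q ` C \<subseteq> C \<longleftrightarrow> refl_sub Q ` C = C"
proof
  assume Q: "subspace Q" and sub: "refl_sub Q ` C \<subseteq> C"
  have "x \<in> refl_sub Q ` C" if "x \<in> C" for x
    using sub that refl_sub_refl_sub[OF Q, of x] by (metis image_eqI image_subset_iff)
  with sub show "refl_sub Q ` C = C" by blast
qed auto

section \<open>Hausdorff distance\<close>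

lemma bdd_above_setdist_image:
  fixes S T :: "'a::metric_space set"
  assumes "bounded S" "T \<noteq> {}"
  shows "bdd_above ((\<lambda>x. setdist {x} T) ` S)"
proof -
  obtain t where t: "t \<in> T" using assms by auto
  obtain e where e: "\<And>x. x \<in> S \<Longrightarrow> dist t x \<le> e"
    using assms(1) bounded_any_center[of S t] by blast
  have "setdist {x} T \<le> e" if "x \<in> S" for x
    using setdist_le_dist[of x "{x}" t T] t e[OF that] by (simp add: dist_commute)
  then show ?thesis by (intro bdd_aboveI2)
qed

lemma hausdorff_dist_commute: "hausdorff_dist S T = hausdorff_dist T S"
  unfolding hausdorff_dist_def by simp

lemma hausdorff_dist_le_iff:
  fixes S T :: "'a::metric_space set"
  assumes "bounded S" "bounded T" "S \<noteq> {}" "T \<noteq> {}"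
  shows "hausdorff_dist S T \<le> e \<longleftrightarrow>
    (\<forall>x\<in>S. setdist {x} T \<le> e) \<and> (\<forall>y\<in>T. setdist {y} S \<le> e)"
  unfolding hausdorff_dist_def
  using cSUP_le_iff[OF assms(3) bdd_above_setdist_image[OF assms(1,4)]]
    cSUP_le_iff[OF assms(4) bdd_above_setdist_image[OF assms(2,3)]]
  by simp

lemma hausdorff_distI:
  fixes S T :: "'a::metric_space set"
  assumes "bounded S" "bounded T" "S \<noteq> {}" "T \<noteq> {}"
    and "\<And>x. x \<in> S \<Longrightarrow> setdist {x} T \<le> e" "\<And>y. y \<in> T \<Longrightarrow> setdist {y} S \<le> e"
  shows "hausdorff_dist S T \<le> e"
  using assms hausdorff_dist_le_iff by blast

lemma setdist_le_hausdorff_dist: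
  fixes S T :: "'a::metric_space set"
  assumes "bounded S" "T \<noteq> {}" "x \<in> S"
  shows "setdist {x} T \<le> hausdorff_dist S T"
  unfolding hausdorff_dist_def
  using cSUP_upper[OF assms(3) bdd_above_setdist_image[OF assms(1,2)]] by simp

lemma hausdorff_dist_nonneg:
  fixes S T :: "'a::metric_space set"
  assumes "bounded S" "S \<noteq> {}" "T \<noteq> {}"
  shows "0 \<le> hausdorff_dist S T"
  using assms setdist_le_hausdorff_dist[OF assms(1,3)] setdist_pos_le by (meson ex_in_conv order_trans)

lemma hausdorff_dist_refl:
  fixes S :: "'a::metric_space set"
  assumes "bounded S" "S \<noteq> {}"
  shows "hausdorff_dist S S = 0"
  using hausdorff_distI[OF assms(1,1,2,2), of 0] hausdorff_dist_nonneg[OF assms(1,2,2)]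
  by (simp add: setdist_eq_0I)

lemma hausdorff_dist_triangle:
  fixes S T U :: "'a::metric_space set"
  assumes "bounded S" "bounded T" "bounded U" "S \<noteq> {}" "T \<noteq> {}" "U \<noteq> {}"
  shows "hausdorff_dist S U \<le> hausdorff_dist S T + hausdorff_dist T U"
proof -
  have through: "setdist {x} C \<le> hausdorff_dist A B + hausdorff_dist B C"
    if "bounded A" "bounded B" "B \<noteq> {}" "C \<noteq> {}" "x \<in> A" for A B C and x :: 'a
  proof -
    have "setdist {x} C - hausdorff_dist B C \<le> setdist {x} B"
    proof (rule le_setdistI)
      fix a b assume "a \<in> {x}" "b \<in> B"
      then have "setdist {x} C \<le> dist a b + setdist {b} C"
        using setdist_triangle[of "{x}" C b] by simp
      also have "\<dots> \<le> dist a b + hausdorff_dist B C"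
        using setdist_le_hausdorff_dist[OF that(2,4) \<open>b \<in> B\<close>] by simp
      finally show "setdist {x} C - hausdorff_dist B C \<le> dist a b" by simp
    qed (use that in auto)
    then show ?thesis using setdist_le_hausdorff_dist[OF that(1,3,5)] by simp
  qed
  show ?thesis
    using through[OF assms(1,2,5,6)] through[OF assms(3,2,5,4)]
    by (intro hausdorff_distI assms) (simp_all add: hausdorff_dist_commute add.commute)
qed

lemma hausdorff_dist_tendsto_trans:
  fixes A B :: "nat \<Rightarrow> 'a::metric_space set"
  assumes A: "\<And>m. bounded (A m)" "\<And>m. A m \<noteq> {}" and B: "\<And>m. bounded (B m)" "\<And>m. B m \<noteq> {}"
    and L: "bounded L" "L \<noteq> {}"
    and AB: "(\<lambda>m. hausdorff_dist (A m) (B m)) \<longlonglongrightarrow> 0" and BL: "(\<lambda>m. hausdorff_dist (B m) L) \<longlonglongrightarrow> 0"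
  shows "(\<lambda>m. hausdorff_dist (A m) L) \<longlonglongrightarrow> 0"
proof (rule tendsto_sandwich[OF _ _ tendsto_const])
  show "\<forall>\<^sub>F m in sequentially. 0 \<le> hausdorff_dist (A m) L"
    using hausdorff_dist_nonneg[OF A L(2)] by (intro always_eventually) blast
  show "\<forall>\<^sub>F m in sequentially. hausdorff_dist (A m) L \<le> hausdorff_dist (A m) (B m) + hausdorff_dist (B m) L"
    using hausdorff_dist_triangle[OF A(1) B(1) L(1) A(2) B(2) L(2)] by (intro always_eventually) blast
  show "(\<lambda>m. hausdorff_dist (A m) (B m) + hausdorff_dist (B m) L) \<longlonglongrightarrow> 0"
    using tendsto_add[OF AB BL] by simp
qed

lemma hausdorff_dist_eq_0D:
  fixes S T :: "'a::metric_space set"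
  assumes "compact S" "compact T" "S \<noteq> {}" "T \<noteq> {}" "hausdorff_dist S T = 0"
  shows "S = T"
proof -
  have "\<forall>x\<in>S. setdist {x} T \<le> 0" "\<forall>y\<in>T. setdist {y} S \<le> 0"
    using hausdorff_dist_le_iff[of S T 0] assms by (auto intro: compact_imp_bounded)
  then have "\<forall>x\<in>S. infdist x T = 0" "\<forall>y\<in>T. infdist y S = 0"
    by (auto simp: infdist_eq_setdist intro: antisym)
  then show ?thesis
    using in_closed_iff_infdist_zero assms compact_imp_closed by blast
qed

lemma hausdorff_dist_attained:
  fixes S T :: "'a::metric_space set"
  assumes "bounded S" "compact T" "T \<noteq> {}" "x \<in> S"
  obtains t where "t \<in> T" "dist x t \<le> hausdorff_dist S T"
proof -
  have "continuous_on T (\<lambda>y. dist x y)" by (intro continuous_intros)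
  then obtain t where t: "t \<in> T" "\<And>y. y \<in> T \<Longrightarrow> dist x t \<le> dist x y"
    using continuous_attains_inf[OF assms(2,3)] by blast
  then have "dist x t \<le> setdist {x} T" by (intro le_setdistI) (use assms in auto)
  also have "\<dots> \<le> hausdorff_dist S T" using setdist_le_hausdorff_dist assms by blast
  finally show ?thesis using that t by blast
qed

section \<open>Blaschke selection theorem\<close>

definition kuratowski_limsup :: "(nat \<Rightarrow> 'a::topological_space set) \<Rightarrow> 'a set" where
  "kuratowski_limsup B = (\<Inter>N. closure (\<Union>k\<in>{N..}. B k))"

lemma kuratowski_limsup_subset: "kuratowski_limsup B \<subseteq> closure (\<Union>k. B k)"
proof -
  have "kuratowski_limsup B \<subseteq> closure (\<Union>k\<in>{0..}. B k)"
    unfolding kuratowski_limsup_def by blast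
  then show ?thesis by simp
qed

lemma compact_kuratowski_limsup:
  fixes B :: "nat \<Rightarrow> 'a::heine_borel set"
  assumes "bounded (\<Union>k. B k)"
  shows "compact (kuratowski_limsup B)"
  unfolding compact_eq_bounded_closed
proof
  show "bounded (kuratowski_limsup B)"
    by (rule bounded_subset[OF bounded_closure[OF assms] kuratowski_limsup_subset])
  show "closed (kuratowski_limsup B)"
    unfolding kuratowski_limsup_def by (intro closed_INT ballI closed_closure)
qed

lemma kuratowski_limsup_near:
  fixes B :: "nat \<Rightarrow> 'a::heine_borel set"
  assumes B: "bounded (\<Union>k. B k)" "\<And>k. compact (B k)" "\<And>k. B k \<noteq> {}"
    and tail: "\<And>n. N \<le> n \<Longrightarrow> hausdorff_dist (B k) (B n) \<le> e" and a: "a \<in> B k"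
  shows "\<exists>x\<in>kuratowski_limsup B. dist a x \<le> e"
proof -
  have "\<exists>b. b \<in> B (N + j) \<and> dist a b \<le> e" for j
  proof -
    obtain b where "b \<in> B (N + j)" "dist a b \<le> hausdorff_dist (B k) (B (N + j))"
      using hausdorff_dist_attained[OF compact_imp_bounded[OF B(2)] B(2,3) a] by blast
    with tail[of "N + j"] show ?thesis by (intro exI[of _ b]) auto
  qed
  then obtain b where b: "\<And>j. b j \<in> B (N + j)" "\<And>j. dist a (b j) \<le> e"
    by metis
  have "range b \<subseteq> (\<Union>k. B k)" using b(1) by blast
  then have "bounded (range b)" by (rule bounded_subset[OF B(1)])
  then obtain l r where r: "strict_mono r" "(b \<circ> r) \<longlonglongrightarrow> l"
    using bounded_imp_convergent_subsequence by blast
  have "dist a l \<le> e"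
    using closed_sequentially[OF closed_cball _ r(2), of a e] b(2) by (simp add: mem_cball)
  moreover have "l \<in> closure (\<Union>k\<in>{M..}. B k)" for M
  proof -
    have "(\<lambda>j. (b \<circ> r) (j + M)) \<longlonglongrightarrow> l" using r(2) by (rule LIMSEQ_ignore_initial_segment)
    moreover have "b (r (j + M)) \<in> (\<Union>k\<in>{M..}. B k)" for j
    proof -
      have "M \<le> N + r (j + M)" using seq_suble[OF r(1), of "j + M"] by linarith
      with b(1) show ?thesis by blast
    qed
    ultimately show ?thesis
      unfolding closure_sequential by (intro exI[of _ "\<lambda>j. b (r (j + M))"]) (simp add: o_def)
  qed
  ultimately show ?thesis unfolding kuratowski_limsup_def by blast
qed

lemma setdist_kuratowski_limsup:
  fixes B :: "nat \<Rightarrow> 'a::metric_space set"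
  assumes B: "\<And>k. bounded (B k)" "\<And>k. B k \<noteq> {}"
    and tail: "\<And>n. N \<le> n \<Longrightarrow> hausdorff_dist (B n) (B k) \<le> e" and e: "e > 0"
    and x: "x \<in> kuratowski_limsup B"
  shows "setdist {x} (B k) \<le> 2 * e"
proof -
  have "x \<in> closure (\<Union>k\<in>{N..}. B k)" using x unfolding kuratowski_limsup_def by blast
  then obtain j y where y: "N \<le> j" "y \<in> B j" "dist y x < e"
    using e unfolding closure_approachable by blast
  have "setdist {y} (B k) \<le> hausdorff_dist (B j) (B k)"
    by (rule setdist_le_hausdorff_dist[OF B(1) B(2) y(2)])
  with tail[OF y(1)] have "setdist {y} (B k) \<le> e" by linarith
  then show ?thesis
    using setdist_Lipschitz[of x "B k" y] y(3) by (simp add: dist_commute)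
qed

theorem hausdorff_cauchy_convergent:
  fixes B :: "nat \<Rightarrow> 'a::heine_borel set"
  assumes B: "bounded (\<Union>k. B k)" "\<And>k. compact (B k)" "\<And>k. B k \<noteq> {}"
    and cauchy: "\<And>e. e > 0 \<Longrightarrow> \<exists>N. \<forall>m\<ge>N. \<forall>n\<ge>N. hausdorff_dist (B m) (B n) < e"
  shows "kuratowski_limsup B \<noteq> {}" "(\<lambda>k. hausdorff_dist (B k) (kuratowski_limsup B)) \<longlonglongrightarrow> 0"
proof -
  let ?L = "kuratowski_limsup B"
  have bB: "\<And>k. bounded (B k)" using B(2) by (simp add: compact_imp_bounded)
  have bL: "bounded ?L" using compact_kuratowski_limsup[OF B(1)] by (rule compact_imp_bounded)
  obtain N0 where N0: "\<And>n. N0 \<le> n \<Longrightarrow> hausdorff_dist (B N0) (B n) \<le> 1"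
    using cauchy[of 1] by (meson less_imp_le order_refl zero_less_one)
  obtain a where "a \<in> B N0" using B(3) by blast
  then show ne: "?L \<noteq> {}" using kuratowski_limsup_near[OF B N0] by blast
  show "(\<lambda>k. hausdorff_dist (B k) ?L) \<longlonglongrightarrow> 0"
  proof (rule LIMSEQ_I)
    fix r :: real assume r: "r > 0"
    obtain N where N: "\<And>m n. N \<le> m \<Longrightarrow> N \<le> n \<Longrightarrow> hausdorff_dist (B m) (B n) \<le> r/3"
      using cauchy[of "r/3"] r by (meson less_imp_le zero_less_divide_iff zero_less_numeral)
    have le: "hausdorff_dist (B k) ?L \<le> 2 * (r/3)" if k: "N \<le> k" for k
    proof (rule hausdorff_distI[OF bB bL B(3) ne])
      fix a assume "a \<in> B k"
      then obtain x where "x \<in> ?L" "dist a x \<le> r/3"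
        using kuratowski_limsup_near[OF B N[OF k]] by blast
      then show "setdist {a} ?L \<le> 2 * (r/3)"
        using setdist_le_dist[of a "{a}" x ?L] r by simp
    next
      fix x assume "x \<in> ?L"
      then show "setdist {x} (B k) \<le> 2 * (r/3)"
        using setdist_kuratowski_limsup[where B = B and N = N and k = k and e = "r/3"] N[OF _ k] bB B(3) r
        by simp
    qed
    have "norm (hausdorff_dist (B k) ?L - 0) < r" if "N \<le> k" for k
      using le[OF that] hausdorff_dist_nonneg[OF bB B(3) ne, of k] r by simp
    then show "\<exists>N. \<forall>k\<ge>N. norm (hausdorff_dist (B k) ?L - 0) < r" by blast
  qed
qed

definition compact_subsets :: "'a::topological_space set \<Rightarrow> 'a set set" where
  "compact_subsets K = {S. compact S \<and> S \<noteq> {} \<and> S \<subseteq> K}"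

lemma Metric_space_hausdorff_dist:
  fixes K :: "'a::metric_space set"
  shows "Metric_space (compact_subsets K) (\<lambda>S T. \<bar>hausdorff_dist S T\<bar>)"
proof
  fix S T U :: "'a set"
  assume S: "S \<in> compact_subsets K" and T: "T \<in> compact_subsets K"
  then have b: "bounded S" "bounded T" "S \<noteq> {}" "T \<noteq> {}" by (auto simp: compact_subsets_def intro: compact_imp_bounded)
  show "\<bar>hausdorff_dist S T\<bar> = 0 \<longleftrightarrow> S = T"
    using S T hausdorff_dist_eq_0D[of S T] hausdorff_dist_refl[OF b(1,3)]
    by (auto simp: compact_subsets_def)
  assume "U \<in> compact_subsets K"
  then have "bounded U" "U \<noteq> {}" by (auto simp: compact_subsets_def intro: compact_imp_bounded)
  with b have "hausdorff_dist S U \<le> hausdorff_dist S T + hausdorff_dist T U"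
    "0 \<le> hausdorff_dist S T" "0 \<le> hausdorff_dist T U" "0 \<le> hausdorff_dist S U"
    by (simp_all add: hausdorff_dist_triangle hausdorff_dist_nonneg)
  then show "\<bar>hausdorff_dist S U\<bar> \<le> \<bar>hausdorff_dist S T\<bar> + \<bar>hausdorff_dist T U\<bar>" by simp
qed (simp_all add: hausdorff_dist_commute)

lemma hausdorff_dist_finite_net:
  fixes A P :: "'a::metric_space set"
  assumes A: "compact A" "A \<noteq> {}" and P: "finite P" "A \<subseteq> (\<Union>x\<in>P. ball x e)"
  shows "\<exists>S\<subseteq>P. S \<noteq> {} \<and> hausdorff_dist S A \<le> e"
proof -
  let ?S = "{p\<in>P. setdist {p} A < e}"
  have near: "\<exists>p\<in>?S. dist a p < e" if a: "a \<in> A" for a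
  proof -
    obtain p where p: "p \<in> P" "dist p a < e" using P(2) a by (auto simp: subset_iff)
    moreover have "setdist {p} A \<le> dist p a" using a by (simp add: setdist_le_dist)
    ultimately show ?thesis by (auto simp: dist_commute)
  qed
  then have ne: "?S \<noteq> {}" using A(2) by blast
  have "bounded ?S" using P(1) by (simp add: finite_imp_bounded)
  then have "hausdorff_dist ?S A \<le> e"
  proof (rule hausdorff_distI[OF _ compact_imp_bounded[OF A(1)] ne A(2)])
    show "setdist {p} A \<le> e" if "p \<in> ?S" for p using that by simp
    fix a assume "a \<in> A"
    then obtain p where "p \<in> ?S" "dist a p < e" using near by blast
    then show "setdist {a} ?S \<le> e" using setdist_le_dist[of a "{a}" p ?S] by simp
  qed
  moreover have "?S \<subseteq> P" by blast
  ultimately show ?thesis using ne by blast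
qed

lemma mtotally_bounded_hausdorff_dist:
  fixes K :: "'a::metric_space set"
  assumes K: "compact K"
  shows "Metric_space.mtotally_bounded (compact_subsets K) (\<lambda>S T. \<bar>hausdorff_dist S T\<bar>)
    (compact_subsets K)"
proof -
  let ?M = "compact_subsets K"
  interpret Metric_space ?M "\<lambda>S T. \<bar>hausdorff_dist S T\<bar>" by (rule Metric_space_hausdorff_dist)
  show ?thesis unfolding mtotally_bounded_def
  proof (intro allI impI)
    fix \<epsilon> :: real assume e: "\<epsilon> > 0"
    obtain P where P: "finite P" "P \<subseteq> K" "K \<subseteq> (\<Union>x\<in>P. ball x (\<epsilon>/2))"
      using seq_compact_imp_totally_bounded[OF compact_imp_seq_compact[OF K], rule_format, of "\<epsilon>/2"] e
      by auto
    let ?N = "{S. S \<subseteq> P \<and> S \<noteq> {}}"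
    have NM: "?N \<subseteq> ?M"
    proof
      fix S assume S: "S \<in> ?N"
      then have "finite S" using P(1) finite_subset by blast
      with S P(2) show "S \<in> ?M" by (auto simp: compact_subsets_def finite_imp_compact)
    qed
    have "A \<in> (\<Union>S\<in>?N. mball S \<epsilon>)" if A: "A \<in> ?M" for A
    proof -
      have "compact A" "A \<noteq> {}" "A \<subseteq> (\<Union>x\<in>P. ball x (\<epsilon>/2))"
        using A P(3) by (auto simp: compact_subsets_def)
      then obtain S where S: "S \<in> ?N" "hausdorff_dist S A \<le> \<epsilon>/2"
        using hausdorff_dist_finite_net[OF _ _ P(1)] by blast
      moreover have "0 \<le> hausdorff_dist S A"
        using A S P(1) by (intro hausdorff_dist_nonneg) (auto simp: compact_subsets_def finite_imp_bounded
            intro: finite_subset)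
      ultimately have "A \<in> mball S \<epsilon>" using A NM e by auto
      with S show ?thesis by blast
    qed
    moreover have "finite ?N" using P(1) by auto
    ultimately show "\<exists>N. finite N \<and> N \<subseteq> ?M \<and> ?M \<subseteq> (\<Union>S\<in>N. mball S \<epsilon>)"
      using NM by blast
  qed
qed




theorem blaschke_selection:
  fixes K :: "'a::heine_borel set" and A :: "nat \<Rightarrow> 'a set"
  assumes K: "compact K" and A: "\<And>k. compact (A k)" "\<And>k. A k \<noteq> {}" "\<And>k. A k \<subseteq> K"
  obtains L r where "strict_mono r" "compact L" "L \<noteq> {}" "L \<subseteq> K"
    "(\<lambda>k. hausdorff_dist (A (r k)) L) \<longlonglongrightarrow> 0"
proof -
  interpret Metric_space "compact_subsets K" "\<lambda>S T. \<bar>hausdorff_dist S T\<bar>"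
    by (rule Metric_space_hausdorff_dist)
  have rA: "range A \<subseteq> compact_subsets K" using A by (auto simp: compact_subsets_def)
  have tb: "mtotally_bounded (compact_subsets K)"
    using mtotally_bounded_hausdorff_dist[OF K] by this
  obtain r where r: "strict_mono r" "MCauchy (A \<circ> r)"
    using mtotally_bounded_sequentially[THEN iffD1, OF tb, THEN conjunct2, rule_format, OF rA] by blast
  let ?B = "\<lambda>k. A (r k)"
  have cauchy: "\<exists>N. \<forall>m\<ge>N. \<forall>n\<ge>N. hausdorff_dist (?B m) (?B n) < e" if e: "e > 0" for e
  proof -
    obtain N where N: "\<forall>m n. N \<le> m \<longrightarrow> N \<le> n \<longrightarrow> \<bar>hausdorff_dist ((A \<circ> r) m) ((A \<circ> r) n)\<bar> < e"
      using r(2)[unfolded MCauchy_def, THEN conjunct2, rule_format, OF e] by blast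
    have "hausdorff_dist (?B m) (?B n) < e" if "N \<le> m" "N \<le> n" for m n
      using N that by (simp add: abs_less_iff)
    then show ?thesis by blast
  qed
  have "(\<Union>k. ?B k) \<subseteq> K" using A(3) by blast
  then have bB: "bounded (\<Union>k. ?B k)" by (rule bounded_subset[OF compact_imp_bounded[OF K]])
  have "kuratowski_limsup ?B \<subseteq> K"
    using kuratowski_limsup_subset[of ?B] closure_minimal[OF \<open>(\<Union>k. ?B k) \<subseteq> K\<close>] K
    by (auto simp: compact_imp_closed)
  with hausdorff_cauchy_convergent[OF bB A(1,2) cauchy] compact_kuratowski_limsup[OF bB] r(1)
  show ?thesis using that by blast
qed

section \<open>Minkowski symmetrization\<close>

lemma minkowski_sym_eq_image:
  "minkowski_sym Q C = (\<lambda>p. (1/2::real) *\<^sub>R (fst p + refl_sub Q (snd p))) ` (C \<times> C)"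
  unfolding minkowski_sym_def msum_def by force

lemma mem_minkowski_sym:
  "x \<in> minkowski_sym Q C \<longleftrightarrow> (\<exists>a\<in>C. \<exists>b\<in>C. x = (1/2::real) *\<^sub>R (a + refl_sub Q b))"
  unfolding minkowski_sym_eq_image by force

lemma linear_midpoint_refl_sub:
  "subspace Q \<Longrightarrow> linear (\<lambda>p::'a::euclidean_space \<times> 'a. (1/2::real) *\<^sub>R (fst p + refl_sub Q (snd p)))"
  using linear_refl_sub[of Q] by (intro linearI) (auto simp: linear_add linear_scale algebra_simps)

lemma compact_minkowski_sym: "subspace Q \<Longrightarrow> compact C \<Longrightarrow> compact (minkowski_sym Q C)"
  unfolding minkowski_sym_eq_image
  by (intro compact_continuous_image linear_continuous_on compact_Times
      linear_conv_bounded_linear[THEN iffD1] linear_midpoint_refl_sub)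

lemma convex_minkowski_sym: "subspace Q \<Longrightarrow> convex C \<Longrightarrow> convex (minkowski_sym Q C)"
  unfolding minkowski_sym_eq_image by (intro convex_linear_image convex_Times linear_midpoint_refl_sub)

lemma minkowski_sym_eq_empty_iff [simp]: "minkowski_sym Q C = {} \<longleftrightarrow> C = {}"
  unfolding minkowski_sym_eq_image by auto

lemma minkowski_sym_mono: "A \<subseteq> B \<Longrightarrow> minkowski_sym Q A \<subseteq> minkowski_sym Q B"
  unfolding minkowski_sym_eq_image by auto

lemma minkowski_sym_subset_cball:
  fixes C :: "'a::euclidean_space set"
  assumes Q: "subspace Q" and C: "C \<subseteq> cball 0 R"
  shows "minkowski_sym Q C \<subseteq> cball 0 R"
proof
  fix x assume "x \<in> minkowski_sym Q C"
  then obtain a b where ab: "a \<in> C" "b \<in> C" "x = (1/2::real) *\<^sub>R (a + refl_sub Q b)"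
    by (auto simp: mem_minkowski_sym)
  have "norm x \<le> (1/2) * (norm a + norm (refl_sub Q b))"
    using ab(3) norm_triangle_ineq[of a "refl_sub Q b"] by simp
  also have "\<dots> \<le> R"
  proof -
    have "norm a \<le> R" "norm b \<le> R" using ab(1,2) C by auto
    then show ?thesis using Q by simp
  qed
  finally show "x \<in> cball 0 R" by simp
qed

lemma minkowski_sym_symmetric:
  fixes C :: "'a::euclidean_space set"
  assumes Q: "subspace Q" and "convex C" and sym: "refl_sub Q ` C = C"
  shows "minkowski_sym Q C = C"
proof
  show "minkowski_sym Q C \<subseteq> C"
  proof
    fix x assume "x \<in> minkowski_sym Q C"
    then obtain a b where ab: "a \<in> C" "b \<in> C" "x = (1/2::real) *\<^sub>R (a + refl_sub Q b)"
      by (auto simp: mem_minkowski_sym)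
    have "(1/2::real) *\<^sub>R a + (1/2::real) *\<^sub>R refl_sub Q b \<in> C"
      using sym ab \<open>convex C\<close> by (intro convexD) auto
    then show "x \<in> C" using ab(3) by (simp add: scaleR_add_right)
  qed
  show "C \<subseteq> minkowski_sym Q C"
  proof
    fix x assume x: "x \<in> C"
    have "x = (1/2::real) *\<^sub>R (x + refl_sub Q (refl_sub Q x))"
      using Q by (simp add: scaleR_2 flip: scaleR_add_left)
    moreover have "refl_sub Q x \<in> C" using sym x by blast
    ultimately show "x \<in> minkowski_sym Q C" using x by (auto simp: mem_minkowski_sym)
  qed
qed

lemma hausdorff_dist_minkowski_sym_le:
  fixes A B :: "'a::euclidean_space set"
  assumes Q: "subspace Q" and A: "compact A" "A \<noteq> {}" and B: "compact B" "B \<noteq> {}"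
  shows "hausdorff_dist (minkowski_sym Q A) (minkowski_sym Q B) \<le> hausdorff_dist A B"
proof -
  have one_side: "setdist {x} (minkowski_sym Q D) \<le> hausdorff_dist C D"
    if C: "compact C" and D: "compact D" "D \<noteq> {}" and x: "x \<in> minkowski_sym Q C" for C D x
  proof -
    obtain a b where ab: "a \<in> C" "b \<in> C" "x = (1/2::real) *\<^sub>R (a + refl_sub Q b)"
      using x by (auto simp: mem_minkowski_sym)
    obtain a' b' where a': "a' \<in> D" "dist a a' \<le> hausdorff_dist C D"
      and b': "b' \<in> D" "dist b b' \<le> hausdorff_dist C D"
      using hausdorff_dist_attained[OF compact_imp_bounded[OF C] D] ab(1,2) by metis
    let ?x' = "(1/2::real) *\<^sub>R (a' + refl_sub Q b')"
    have diff: "x - ?x' = (1/2::real) *\<^sub>R ((a - a') + (refl_sub Q b - refl_sub Q b'))"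
      using ab(3) by (simp add: algebra_simps)
    have "?x' \<in> minkowski_sym Q D" using a' b' by (auto simp: mem_minkowski_sym)
    then have "setdist {x} (minkowski_sym Q D) \<le> dist x ?x'" by (simp add: setdist_le_dist)
    also have "\<dots> = (1/2) * norm ((a - a') + (refl_sub Q b - refl_sub Q b'))"
      using diff by (simp add: dist_norm)
    also have "\<dots> \<le> (1/2) * (dist a a' + dist b b')"
      using norm_triangle_ineq[of "a - a'" "refl_sub Q b - refl_sub Q b'"] dist_refl_sub[OF Q, of b b']
      by (simp add: dist_norm)
    also have "\<dots> \<le> hausdorff_dist C D" using a' b' by simp
    finally show ?thesis .
  qed
  show ?thesis
    using one_side[OF A(1) B] one_side[OF B(1) A] compact_minkowski_sym[OF Q] A B
    by (intro hausdorff_distI) (simp_all add: compact_imp_bounded hausdorff_dist_commute)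
qed

lemma compact_sym_iter: "(\<And>k. subspace (H k)) \<Longrightarrow> compact C \<Longrightarrow> compact (sym_iter H m C)"
  by (induction m) (simp_all add: compact_minkowski_sym)

lemma convex_sym_iter: "(\<And>k. subspace (H k)) \<Longrightarrow> convex C \<Longrightarrow> convex (sym_iter H m C)"
  by (induction m) (simp_all add: convex_minkowski_sym)

lemma sym_iter_eq_empty_iff [simp]: "sym_iter H m C = {} \<longleftrightarrow> C = {}"
  by (induction m) simp_all

lemma sym_iter_mono: "A \<subseteq> B \<Longrightarrow> sym_iter H m A \<subseteq> sym_iter H m B"
  by (induction m) (simp_all add: minkowski_sym_mono)

lemma sym_iter_subset_cball:
  "(\<And>k. subspace (H k)) \<Longrightarrow> C \<subseteq> cball 0 R \<Longrightarrow> sym_iter H m C \<subseteq> cball 0 R"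
  by (induction m) (simp_all add: minkowski_sym_subset_cball)

section \<open>Support functions\<close>

definition support_fun :: "'a::real_inner set \<Rightarrow> 'a \<Rightarrow> real" where
  "support_fun C u = Sup ((\<lambda>c. u \<bullet> c) ` C)"

lemma bdd_above_inner_image: "compact C \<Longrightarrow> bdd_above ((\<lambda>c. u \<bullet> c) ` C)"
  for C :: "'a::real_inner set"
  by (intro bounded_imp_bdd_above compact_imp_bounded compact_continuous_image continuous_intros)

lemma support_fun_ge: "compact C \<Longrightarrow> c \<in> C \<Longrightarrow> u \<bullet> c \<le> support_fun C u"
  unfolding support_fun_def by (rule cSup_upper) (auto intro: bdd_above_inner_image)

lemma support_fun_attained:
  fixes C :: "'a::real_inner set"
  assumes "compact C" "C \<noteq> {}"
  obtains c where "c \<in> C" "support_fun C u = u \<bullet> c"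
proof -
  have "continuous_on C (\<lambda>c. u \<bullet> c)" by (intro continuous_intros)
  then obtain c where c: "c \<in> C" "\<forall>y\<in>C. u \<bullet> y \<le> u \<bullet> c"
    using continuous_attains_sup[OF assms] by blast
  then have "support_fun C u = u \<bullet> c"
    unfolding support_fun_def by (intro cSup_eq_maximum) auto
  with c that show ?thesis by blast
qed

lemma support_fun_le:
  fixes C :: "'a::real_inner set"
  assumes "compact C" "C \<noteq> {}" "\<And>c. c \<in> C \<Longrightarrow> u \<bullet> c \<le> M"
  shows "support_fun C u \<le> M"
  by (metis assms support_fun_attained)

lemma support_fun_le_hausdorff:
  fixes A B :: "'a::real_inner set"
  assumes A: "compact A" "A \<noteq> {}" and B: "compact B" "B \<noteq> {}"
  shows "support_fun A u \<le> support_fun B u + norm u * hausdorff_dist A B"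
proof -
  obtain a where a: "a \<in> A" "support_fun A u = u \<bullet> a" using support_fun_attained[OF A] .
  obtain b where b: "b \<in> B" "dist a b \<le> hausdorff_dist A B"
    using hausdorff_dist_attained[OF compact_imp_bounded[OF A(1)] B a(1)] .
  have "u \<bullet> a = u \<bullet> b + u \<bullet> (a - b)" by (simp add: inner_diff_right)
  also have "u \<bullet> (a - b) \<le> norm u * norm (a - b)" by (rule norm_cauchy_schwarz)
  also have "\<dots> \<le> norm u * hausdorff_dist A B" using b(2) by (simp add: dist_norm mult_left_mono)
  also have "u \<bullet> b \<le> support_fun B u" by (rule support_fun_ge[OF B(1) b(1)])
  finally show ?thesis using a(2) by simp
qed

lemma support_fun_lipschitz:
  fixes C :: "'a::real_inner set"
  assumes C: "compact C" "C \<noteq> {}" "C \<subseteq> cball 0 R"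
  shows "\<bar>support_fun C u - support_fun C v\<bar> \<le> R * norm (u - v)"
proof -
  have "support_fun C u \<le> support_fun C v + R * norm (u - v)" for u v
  proof -
    obtain c where c: "c \<in> C" "support_fun C u = u \<bullet> c" using support_fun_attained[OF C(1,2)] .
    have "u \<bullet> c = v \<bullet> c + (u - v) \<bullet> c" by (simp add: inner_diff_left)
    also have "(u - v) \<bullet> c \<le> norm (u - v) * norm c" by (rule norm_cauchy_schwarz)
    also have "\<dots> \<le> norm (u - v) * R" using c(1) C(3) by (intro mult_left_mono) auto
    also have "v \<bullet> c \<le> support_fun C v" by (rule support_fun_ge[OF C(1) c(1)])
    finally show ?thesis using c(2) by (simp add: mult.commute)
  qed
  from this[of u v] this[of v u] show ?thesis by (simp add: norm_minus_commute abs_le_iff)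
qed

lemma support_fun_zero: "compact C \<Longrightarrow> C \<noteq> {} \<Longrightarrow> support_fun C 0 = 0"
  by (metis inner_zero_left support_fun_attained)

lemma abs_support_fun_le:
  fixes C :: "'a::real_inner set"
  assumes "compact C" "C \<noteq> {}" "C \<subseteq> cball 0 R"
  shows "\<bar>support_fun C u\<bar> \<le> R * norm u"
  using support_fun_lipschitz[OF assms, of u 0] support_fun_zero[OF assms(1,2)] by simp

lemma continuous_on_support_fun:
  fixes C :: "'a::real_inner set"
  assumes C: "compact C" "C \<noteq> {}"
  shows "continuous_on UNIV (support_fun C)"
proof -
  obtain R where R: "R > 0" "\<forall>x\<in>C. norm x \<le> R"
    using compact_imp_bounded[OF C(1)] unfolding bounded_pos by blast
  then have "C \<subseteq> cball 0 R" by auto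
  with R support_fun_lipschitz[OF C] have "R-lipschitz_on UNIV (support_fun C)"
    unfolding lipschitz_on_def by (simp add: dist_real_def dist_norm)
  then show ?thesis by (rule lipschitz_on_continuous_on)
qed

lemma support_fun_minkowski_sym:
  fixes C :: "'a::euclidean_space set"
  assumes Q: "subspace Q" and C: "compact C" "C \<noteq> {}"
  shows "support_fun (minkowski_sym Q C) u = (support_fun C u + support_fun C (refl_sub Q u)) / 2"
proof (rule antisym)
  have MC: "compact (minkowski_sym Q C)" "minkowski_sym Q C \<noteq> {}"
    using compact_minkowski_sym[OF Q C(1)] C(2) by auto
  show "support_fun (minkowski_sym Q C) u \<le> (support_fun C u + support_fun C (refl_sub Q u)) / 2"
  proof (rule support_fun_le[OF MC])
    fix x assume "x \<in> minkowski_sym Q C"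
    then obtain a b where ab: "a \<in> C" "b \<in> C" "x = (1/2::real) *\<^sub>R (a + refl_sub Q b)"
      by (auto simp: mem_minkowski_sym)
    have "u \<bullet> x = (u \<bullet> a + refl_sub Q u \<bullet> b) / 2"
      using ab(3) refl_sub_inner_commute[OF Q, of u b] by (simp add: inner_add_right)
    also have "\<dots> \<le> (support_fun C u + support_fun C (refl_sub Q u)) / 2"
      using support_fun_ge[OF C(1) ab(1), of u] support_fun_ge[OF C(1) ab(2), of "refl_sub Q u"] by simp
    finally show "u \<bullet> x \<le> (support_fun C u + support_fun C (refl_sub Q u)) / 2" .
  qed
  obtain a where a: "a \<in> C" "support_fun C u = u \<bullet> a" using support_fun_attained[OF C] .
  obtain b where b: "b \<in> C" "support_fun C (refl_sub Q u) = refl_sub Q u \<bullet> b"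
    using support_fun_attained[OF C] .
  have "(1/2::real) *\<^sub>R (a + refl_sub Q b) \<in> minkowski_sym Q C"
    using a b by (auto simp: mem_minkowski_sym)
  then have "u \<bullet> ((1/2::real) *\<^sub>R (a + refl_sub Q b)) \<le> support_fun (minkowski_sym Q C) u"
    by (rule support_fun_ge[OF MC(1)])
  then show "(support_fun C u + support_fun C (refl_sub Q u)) / 2 \<le> support_fun (minkowski_sym Q C) u"
    using a(2) b(2) refl_sub_inner_commute[OF Q, of u b] by (simp add: inner_add_right)
qed

section \<open>Integration over the unit ball\<close>

lemma absolutely_integrable_continuous_compact:
  fixes f :: "'a::euclidean_space \<Rightarrow> 'b::euclidean_space"
  assumes "continuous_on UNIV f" "compact S"
  shows "f absolutely_integrable_on S"
proof -
  obtain a where a: "S \<subseteq> cbox (-a) a"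
    using bounded_subset_cbox_symmetric compact_imp_bounded[OF assms(2)] by blast
  have "f absolutely_integrable_on cbox (-a) a"
    using assms by (intro absolutely_integrable_continuous continuous_on_subset[OF assms(1)]) auto
  moreover have "S \<in> sets lebesgue" using assms(2) by (simp add: borel_compact)
  ultimately show ?thesis using a set_integrable_subset by blast
qed

lemma integrable_continuous_compact:
  fixes f :: "'a::euclidean_space \<Rightarrow> 'b::euclidean_space"
  shows "continuous_on UNIV f \<Longrightarrow> compact S \<Longrightarrow> f integrable_on S"
  using absolutely_integrable_continuous_compact absolutely_integrable_on_def by blast

lemma integral_cball_orthogonal_transformation:
  fixes f :: "real^'n::{finite,wellorder} \<Rightarrow> real"
    and g :: "real^'n::{finite,wellorder} \<Rightarrow> real^'n::{finite,wellorder}"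
  assumes g: "orthogonal_transformation g" and f: "continuous_on UNIV f"
  shows "integral (cball 0 r) (\<lambda>x. f (g x)) = integral (cball 0 r) f"
proof -
  define F where "F x = f x *\<^sub>R (1 :: real^1)" for x
  have F: "continuous_on UNIV F" unfolding F_def by (intro continuous_intros f)
  have Fg: "continuous_on UNIV (F \<circ> g)"
    using linear_continuous_on[OF linear_conv_bounded_linear[THEN iffD1]] orthogonal_transformation_linear[OF g]
    by (intro continuous_on_compose[OF _ continuous_on_subset[OF F]]) auto
  have "\<bar>det (matrix g)\<bar> = 1"
    using det_orthogonal_matrix orthogonal_transformation_matrix g by (metis abs_1 abs_neg_one)
  moreover have "g ` cball 0 r = cball 0 r"
    using image_orthogonal_transformation_cball[OF g] g by (simp add: linear_0 orthogonal_transformation_linear)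
  ultimately have "integral (cball 0 r) F = integral (cball 0 r) (F \<circ> g)"
    using integral_change_of_variables_linear[OF orthogonal_transformation_linear[OF g], where f = F and S = "cball 0 r"]
      absolutely_integrable_continuous_compact[OF F compact_cball]
    by simp
  then show ?thesis
    using integral_component_eq_cart[OF integrable_continuous_compact[OF Fg compact_cball[of 0 r]], where k = 1]
      integral_component_eq_cart[OF integrable_continuous_compact[OF F compact_cball[of 0 r]], where k = 1]
    by (simp add: F_def)
qed

lemma integral_cball_pos:
  fixes f :: "'a::euclidean_space \<Rightarrow> real"
  assumes f: "continuous_on UNIV f" "\<And>x. 0 \<le> f x" and v: "norm v < r" "f v > 0"
  shows "integral (cball 0 r) f > 0"
proof -
  obtain d where d: "d > 0" "\<And>x. dist x v < d \<Longrightarrow> dist (f x) (f v) < f v / 2"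
    using f(1) v(2) unfolding continuous_on_eq_continuous_at[OF open_UNIV] continuous_at_eps_delta
    by (metis UNIV_I half_gt_zero)
  define e where "e = min (d/2) ((r - norm v)/2)"
  have e: "e > 0" using d v by (simp add: e_def)
  obtain a b where ab: "v \<in> box a b" "box a b \<subseteq> ball v e" using rational_boxes[OF e, of v] by blast
  then have "closure (box a b) = cbox a b" by (intro closure_box) blast
  then have sub: "cbox a b \<subseteq> cball v e"
    using closure_mono[OF ab(2)] e by simp
  have sub_ball: "cbox a b \<subseteq> cball 0 r"
  proof
    fix x assume "x \<in> cbox a b"
    then have "norm x \<le> norm v + e"
      using sub norm_triangle_ineq2[of x v] by (force simp: dist_norm norm_minus_commute)
    moreover have "e \<le> (r - norm v) / 2" unfolding e_def by (rule min.cobounded2)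
    ultimately show "x \<in> cball 0 r" using v by simp
  qed
  have low: "f v / 2 \<le> f x" if "x \<in> cbox a b" for x
  proof -
    have "dist x v < d" using sub that d e by (auto simp: e_def dist_commute)
    then have "\<bar>f x - f v\<bar> < f v / 2" using d(2) by (simp add: dist_real_def)
    then show ?thesis by linarith
  qed
  have intf: "f integrable_on cbox a b"
    by (rule integrable_continuous, rule continuous_on_subset[OF f(1)], simp)
  have "box a b \<noteq> {}" using ab(1) by blast
  then have "0 < measure lborel (cbox a b) * (f v / 2)"
    using v by (simp add: content_pos_lt_eq box_ne_empty)
  also have "\<dots> = integral (cbox a b) (\<lambda>_. f v / 2)" by simp
  also have "\<dots> \<le> integral (cbox a b) f" by (rule integral_le) (use low intf in auto)
  also have "\<dots> \<le> integral (cball 0 r) f"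
    by (rule integral_subset_le[OF sub_ball]) (use intf integrable_continuous_compact[OF f(1)] f(2) in auto)
  finally show ?thesis .
qed

section \<open>The energy functional\<close>

typedef (overloaded) 'a coord = "{..<DIM('a::euclidean_space)}"
  by (rule exI[of _ 0]) simp

instantiation coord :: (euclidean_space) linorder
begin

definition less_eq_coord :: "'a coord \<Rightarrow> 'a coord \<Rightarrow> bool"
  where "less_eq_coord i j \<longleftrightarrow> Rep_coord i \<le> Rep_coord j"

definition less_coord :: "'a coord \<Rightarrow> 'a coord \<Rightarrow> bool"
  where "less_coord i j \<longleftrightarrow> Rep_coord i < Rep_coord j"

instance
proof
  fix i j k :: "'a coord"
  show "i < j \<longleftrightarrow> i \<le> j \<and> \<not> j \<le> i" by (simp add: less_eq_coord_def less_coord_def less_le_not_le)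
  show "i \<le> i" by (simp add: less_eq_coord_def)
  show "i \<le> j \<Longrightarrow> j \<le> k \<Longrightarrow> i \<le> k" by (simp add: less_eq_coord_def)
  show "i \<le> j \<Longrightarrow> j \<le> i \<Longrightarrow> i = j" by (simp add: less_eq_coord_def Rep_coord_inject[symmetric])
  show "i \<le> j \<or> j \<le> i" by (simp add: less_eq_coord_def nat_le_linear)
qed

end

instance coord :: (euclidean_space) wellorder
proof
  fix P :: "'a coord \<Rightarrow> bool" and a
  assume step: "\<And>x. (\<And>y. y < x \<Longrightarrow> P y) \<Longrightarrow> P x"
  show "P a"
    by (induction a rule: measure_induct_rule[of Rep_coord]) (rule step, simp add: less_coord_def)
qed

instance coord :: (euclidean_space) finite
proof
  have "(UNIV :: 'a coord set) = Abs_coord ` {..<DIM('a)}"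
    by (rule type_definition.Abs_image[OF type_definition_coord, symmetric])
  then show "finite (UNIV :: 'a coord set)" by (metis finite_imageI finite_lessThan)
qed

lemma CARD_coord: "CARD('a::euclidean_space coord) = DIM('a)"
  using type_definition.card[OF type_definition_coord] by simp

definition coord_iso :: "real^('a::euclidean_space coord) \<Rightarrow> 'a" where
  "coord_iso = (SOME f. linear f \<and> (\<forall>v. norm (f v) = norm v) \<and> (\<exists>g. linear g \<and> (\<forall>x. f (g x) = x)))"

lemma coord_iso_spec:
  "linear (coord_iso :: real^('a::euclidean_space coord) \<Rightarrow> 'a) \<and> (\<forall>v. norm (coord_iso v :: 'a) = norm v) \<and>
    (\<exists>g. linear g \<and> (\<forall>x::'a. coord_iso (g x) = x))"
proof -
  have "DIM(real^('a coord)) = DIM('a)" by (simp add: CARD_coord)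
  then obtain f :: "real^('a coord) \<Rightarrow> 'a" and g
    where "linear f" "linear g" "\<And>v. norm (f v) = norm v" "\<And>x. f (g x) = x"
    by (rule isomorphisms_UNIV_UNIV) blast
  then have "\<exists>f :: real^('a coord) \<Rightarrow> 'a.
      linear f \<and> (\<forall>v. norm (f v) = norm v) \<and> (\<exists>g. linear g \<and> (\<forall>x. f (g x) = x))"
    by blast
  then show ?thesis unfolding coord_iso_def by (rule someI_ex)
qed

lemma linear_coord_iso: "linear coord_iso"
  using coord_iso_spec by blast

lemma norm_coord_iso [simp]: "norm (coord_iso v) = norm v"
  using coord_iso_spec by blast

lemma orthogonal_transformation_coord_conj:
  fixes R :: "'a::euclidean_space \<Rightarrow> 'a"
  assumes R: "orthogonal_transformation R"
  obtains g :: "real^('a coord) \<Rightarrow> real^('a coord)"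
  where "orthogonal_transformation g" "\<And>v. coord_iso (g v) = R (coord_iso v)"
proof -
  obtain h :: "'a \<Rightarrow> real^('a coord)" where h: "linear h" "\<And>x. coord_iso (h x) = x"
    using coord_iso_spec by blast
  let ?g = "\<lambda>v. h (R (coord_iso v))"
  have "linear ?g"
    using linear_compose[OF linear_compose[OF linear_coord_iso orthogonal_transformation_linear[OF R]] h(1)]
    by (simp add: o_def)
  moreover have "norm (?g v) = norm v" for v
    using norm_coord_iso[of "?g v"] h(2) R by (simp add: orthogonal_transformation)
  ultimately have "orthogonal_transformation ?g" by (simp add: orthogonal_transformation)
  then show ?thesis using that h(2) by blast
qed

text \<open>The unit ball is taken in coordinates, since the change of variables for linear maps is
  only available in the library for the types real^'n; coord_iso is an isometry onto 'a.\<close>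

definition energy :: "'a::euclidean_space set \<Rightarrow> real" where
  "energy C = integral (cball 0 1) (\<lambda>v::real^('a coord). (support_fun C (coord_iso v))\<^sup>2)"

lemma continuous_on_support_fun_linear:
  fixes C :: "'a::euclidean_space set" and L :: "'b::euclidean_space \<Rightarrow> 'a"
  assumes C: "compact C" "C \<noteq> {}" and L: "linear L"
  shows "continuous_on UNIV (\<lambda>v. support_fun C (L v))"
  using L by (intro continuous_on_compose2[OF continuous_on_support_fun[OF C]] linear_continuous_on
      linear_conv_bounded_linear[THEN iffD1]) auto

lemma energy_nonneg: "0 \<le> energy C"
  unfolding energy_def
  by (cases "(\<lambda>v::real^('a coord). (support_fun C (coord_iso v))\<^sup>2) integrable_on cball 0 1")
    (auto intro: integral_nonneg simp: not_integrable_integral)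

lemma energy_minkowski_sym:
  fixes C :: "'a::euclidean_space set"
  assumes Q: "subspace Q" and C: "compact C" "C \<noteq> {}"
  shows "energy (minkowski_sym Q C) = energy C - integral (cball 0 1)
    (\<lambda>v::real^('a coord). (support_fun C (coord_iso v) - support_fun C (refl_sub Q (coord_iso v)))\<^sup>2) / 4"
proof -
  obtain g where g: "orthogonal_transformation g" "\<And>v. coord_iso (g v) = refl_sub Q (coord_iso v)"
    using orthogonal_transformation_coord_conj[OF orthogonal_transformation_refl_sub[OF Q]] by blast
  define a where "a v = support_fun C (coord_iso v)" for v :: "real^('a coord)"
  define b where "b v = support_fun C (refl_sub Q (coord_iso v))" for v :: "real^('a coord)"
  have ca: "continuous_on UNIV a"
    unfolding a_def by (rule continuous_on_support_fun_linear[OF C linear_coord_iso])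
  have cb: "continuous_on UNIV b"
    unfolding b_def using linear_compose[OF linear_coord_iso linear_refl_sub[OF Q]]
    by (intro continuous_on_support_fun_linear[OF C, unfolded o_def]) (simp add: o_def)
  let ?I = "integral (cball (0::real^('a coord)) 1)"
  have int: "continuous_on UNIV f \<Longrightarrow> f integrable_on cball 0 1" for f :: "real^('a coord) \<Rightarrow> real"
    by (rule integrable_continuous_compact) auto
  have "?I (\<lambda>v. (b v)\<^sup>2) = ?I (\<lambda>v. (a v)\<^sup>2)"
    using integral_cball_orthogonal_transformation[OF g(1), of "\<lambda>v. (a v)\<^sup>2"] ca
    by (simp add: a_def b_def g(2) continuous_intros)
  have "energy (minkowski_sym Q C) = ?I (\<lambda>v. ((a v + b v) / 2)\<^sup>2)"
    unfolding energy_def a_def b_def by (simp add: support_fun_minkowski_sym[OF Q C])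
  also have "\<dots> = ?I (\<lambda>v. (a v)\<^sup>2 / 2 + (b v)\<^sup>2 / 2 - (a v - b v)\<^sup>2 / 4)"
    by (intro arg_cong[where f = ?I] ext) (simp add: power2_eq_square field_simps)
  also have "\<dots> = ?I (\<lambda>v. (a v)\<^sup>2) / 2 + ?I (\<lambda>v. (b v)\<^sup>2) / 2 - ?I (\<lambda>v. (a v - b v)\<^sup>2) / 4"
    using ca cb by (simp add: integral_diff integral_add integral_divide int continuous_intros)
  also have "\<dots> = energy C - ?I (\<lambda>v. (a v - b v)\<^sup>2) / 4"
    using \<open>?I (\<lambda>v. (b v)\<^sup>2) = _\<close> by (simp add: energy_def a_def)
  finally show ?thesis by (simp add: a_def b_def)
qed

lemma continuous_on_support_fun_refl_sub_diff:
  fixes C :: "'a::euclidean_space set"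
  assumes Q: "subspace Q" and C: "compact C" "C \<noteq> {}"
  shows "continuous_on UNIV
    (\<lambda>v::real^('a coord). (support_fun C (coord_iso v) - support_fun C (refl_sub Q (coord_iso v)))\<^sup>2)"
  using linear_compose[OF linear_coord_iso linear_refl_sub[OF Q]]
  by (intro continuous_intros continuous_on_support_fun_linear[OF C linear_coord_iso]
      continuous_on_support_fun_linear[OF C, unfolded o_def]) (simp add: o_def)

lemma energy_minkowski_sym_le:
  fixes C :: "'a::euclidean_space set"
  assumes "subspace Q" "compact C" "C \<noteq> {}"
  shows "energy (minkowski_sym Q C) \<le> energy C"
  using energy_minkowski_sym[OF assms]
    integral_nonneg[OF integrable_continuous_compact[OF continuous_on_support_fun_refl_sub_diff[OF assms]]]
  by fastforce

lemma support_fun_asymmetric: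
  fixes C :: "'a::euclidean_space set"
  assumes Q: "subspace Q" and C: "compact C" "convex C" and asym: "refl_sub Q ` C \<noteq> C"
  obtains u where "norm u < 1" "support_fun C u < support_fun C (refl_sub Q u)"
proof -
  obtain x where x: "x \<in> C" "refl_sub Q x \<notin> C"
    using asym refl_sub_image_subset_iff[OF Q] by blast
  obtain w \<beta> where w: "w \<bullet> refl_sub Q x < \<beta>" "\<And>y. y \<in> C \<Longrightarrow> w \<bullet> y > \<beta>"
    using separating_hyperplane_closed_point[OF C(2) compact_imp_closed[OF C(1)] x(2)] by blast
  have "w \<noteq> 0" using w x(1) by force
  define t where "t = 1 / (2 * norm w)"
  have t: "t > 0" using \<open>w \<noteq> 0\<close> by (simp add: t_def)
  define u where "u = - t *\<^sub>R w"
  have "norm u < 1" using \<open>w \<noteq> 0\<close> by (simp add: u_def t_def)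
  have "support_fun C u \<le> - t * \<beta>"
    using C(1) x(1) w(2) t by (intro support_fun_le) (auto simp: u_def less_imp_le)
  also have "- t * \<beta> < u \<bullet> refl_sub Q x" using w(1) t by (simp add: u_def)
  also have "\<dots> = refl_sub Q u \<bullet> x" by (simp add: refl_sub_inner_commute[OF Q])
  also have "\<dots> \<le> support_fun C (refl_sub Q u)" by (rule support_fun_ge[OF C(1) x(1)])
  finally show ?thesis using that \<open>norm u < 1\<close> by blast
qed

lemma energy_minkowski_sym_less:
  fixes C :: "'a::euclidean_space set"
  assumes Q: "subspace Q" and C: "compact C" "C \<noteq> {}" "convex C" and asym: "refl_sub Q ` C \<noteq> C"
  shows "energy (minkowski_sym Q C) < energy C"
proof -
  obtain u where u: "norm u < 1" "support_fun C u < support_fun C (refl_sub Q u)"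
    using support_fun_asymmetric[OF Q C(1,3) asym] .
  obtain v where "coord_iso v = u" using coord_iso_spec by metis
  then have "0 < integral (cball 0 1)
    (\<lambda>v::real^('a coord). (support_fun C (coord_iso v) - support_fun C (refl_sub Q (coord_iso v)))\<^sup>2)"
    using u by (intro integral_cball_pos[OF continuous_on_support_fun_refl_sub_diff[OF Q C(1,2)], of v]) auto
  then show ?thesis using energy_minkowski_sym[OF Q C(1,2)] by simp
qed

lemma support_fun_square_le_hausdorff:
  fixes A B :: "'a::real_inner set"
  assumes A: "compact A" "A \<noteq> {}" "A \<subseteq> cball 0 R" and B: "compact B" "B \<noteq> {}" "B \<subseteq> cball 0 R"
    and u: "norm u \<le> 1"
  shows "(support_fun A u)\<^sup>2 \<le> (support_fun B u)\<^sup>2 + 2 * R * hausdorff_dist A B"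
proof -
  define a b where "a = support_fun A u" and "b = support_fun B u"
  let ?d = "hausdorff_dist A B"
  have d: "0 \<le> ?d" using hausdorff_dist_nonneg compact_imp_bounded A B by blast
  have "\<bar>a - b\<bar> \<le> norm u * ?d"
    using support_fun_le_hausdorff[OF A(1,2) B(1,2), of u] support_fun_le_hausdorff[OF B(1,2) A(1,2), of u]
    unfolding a_def b_def hausdorff_dist_commute[of B A] by linarith
  also have "\<dots> \<le> ?d" using u d by (simp add: mult_left_le_one_le)
  finally have ab: "\<bar>a - b\<bar> \<le> ?d" .
  have "\<bar>a\<bar> \<le> R * norm u" "\<bar>b\<bar> \<le> R * norm u"
    unfolding a_def b_def by (rule abs_support_fun_le[OF A], rule abs_support_fun_le[OF B])
  moreover have "0 \<le> R" using A(2,3) by auto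
  then have "R * norm u \<le> R" using u by (simp add: mult_left_le)
  ultimately have "\<bar>a + b\<bar> \<le> 2 * R" by linarith
  have "a\<^sup>2 - b\<^sup>2 = (a - b) * (a + b)" by (simp add: power2_eq_square algebra_simps)
  also have "\<dots> \<le> \<bar>a - b\<bar> * \<bar>a + b\<bar>" by (metis abs_ge_self abs_mult)
  also have "\<dots> \<le> ?d * (2 * R)" using ab \<open>\<bar>a + b\<bar> \<le> 2 * R\<close> d by (intro mult_mono) auto
  finally show ?thesis by (simp add: a_def b_def algebra_simps)
qed

lemma energy_lipschitz:
  "\<exists>c\<ge>0. \<forall>A\<in>compact_subsets (cball 0 R). \<forall>B\<in>compact_subsets (cball (0::'a::euclidean_space) R).
    energy A \<le> energy B + c * hausdorff_dist A B"
proof (intro exI[of _ "2 * \<bar>R\<bar> * integral (cball (0::real^('a coord)) 1) (\<lambda>_. 1)"] conjI ballI)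
  let ?I = "integral (cball (0::real^('a coord)) 1)"
  show "2 * \<bar>R\<bar> * ?I (\<lambda>_. 1) \<ge> 0"
    by (intro mult_nonneg_nonneg integral_nonneg integrable_continuous_compact) auto
  fix A B :: "'a set"
  assume "A \<in> compact_subsets (cball 0 R)" "B \<in> compact_subsets (cball 0 R)"
  then have A: "compact A" "A \<noteq> {}" "A \<subseteq> cball 0 R" and B: "compact B" "B \<noteq> {}" "B \<subseteq> cball 0 R"
    by (auto simp: compact_subsets_def)
  have "\<bar>R\<bar> = R" using A(2,3) by auto
  let ?d = "hausdorff_dist A B"
  have int: "continuous_on UNIV f \<Longrightarrow> f integrable_on cball 0 1" for f :: "real^('a coord) \<Rightarrow> real"
    by (rule integrable_continuous_compact) auto
  have cA: "continuous_on UNIV (\<lambda>v. support_fun A (coord_iso v))"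
    and cB: "continuous_on UNIV (\<lambda>v. support_fun B (coord_iso v))"
    using continuous_on_support_fun_linear[OF _ _ linear_coord_iso] A B by auto
  have "energy A \<le> ?I (\<lambda>v. (support_fun B (coord_iso v))\<^sup>2 + 2 * \<bar>R\<bar> * ?d)"
    unfolding energy_def \<open>\<bar>R\<bar> = R\<close> using support_fun_square_le_hausdorff[OF A B] cA cB
    by (intro integral_le int continuous_intros) auto
  also have "\<dots> = energy B + ?I (\<lambda>_. (2 * \<bar>R\<bar> * ?d) *\<^sub>R 1)"
    unfolding energy_def using cB by (simp add: integral_add int continuous_intros)
  also have "\<dots> = energy B + 2 * \<bar>R\<bar> * ?I (\<lambda>_. 1) * ?d"
    by (simp only: integral_cmul) simp
  finally show "energy A \<le> energy B + 2 * \<bar>R\<bar> * ?I (\<lambda>_. 1) * ?d" .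
qed

section \<open>Convergence for convex sets\<close>

lemma convex_hausdorff_limit:
  fixes A :: "nat \<Rightarrow> 'a::euclidean_space set"
  assumes A: "\<And>k. compact (A k)" "\<And>k. A k \<noteq> {}" "\<And>k. convex (A k)"
    and L: "compact L" "L \<noteq> {}" and lim: "(\<lambda>k. hausdorff_dist (A k) L) \<longlonglongrightarrow> 0"
  shows "convex L"
proof (rule convexI)
  fix x y :: 'a and u v :: real
  assume xy: "x \<in> L" "y \<in> L" and uv: "0 \<le> u" "0 \<le> v" "u + v = 1"
  let ?p = "u *\<^sub>R x + v *\<^sub>R y"
  have bL: "bounded L" using L compact_imp_bounded by auto
  have bound: "setdist {?p} L \<le> 2 * hausdorff_dist (A k) L" for k
  proof -
    let ?d = "hausdorff_dist (A k) L"
    obtain a b where a: "a \<in> A k" "dist x a \<le> ?d" and b: "b \<in> A k" "dist y b \<le> ?d"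
      using hausdorff_dist_attained[OF bL A(1,2)] xy hausdorff_dist_commute[of L "A k"] by metis
    let ?q = "u *\<^sub>R a + v *\<^sub>R b"
    have "dist ?p ?q = norm (u *\<^sub>R (x - a) + v *\<^sub>R (y - b))" by (simp add: dist_norm algebra_simps)
    also have "\<dots> \<le> u * dist x a + v * dist y b"
      using norm_triangle_ineq[of "u *\<^sub>R (x - a)" "v *\<^sub>R (y - b)"] uv by (simp add: dist_norm)
    also have "\<dots> \<le> u * ?d + v * ?d" using a(2) b(2) uv by (intro add_mono mult_left_mono) auto
    also have "\<dots> = ?d" using uv by (simp flip: distrib_right)
    finally have "dist ?p ?q \<le> ?d" .
    moreover have "setdist {?q} L \<le> ?d"
      using setdist_le_hausdorff_dist[OF compact_imp_bounded[OF A(1)] L(2)] convexD[OF A(3) a(1) b(1) uv] .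
    ultimately show ?thesis using setdist_Lipschitz[of ?p L ?q] by simp
  qed
  have "(\<lambda>k. 2 * hausdorff_dist (A k) L) \<longlonglongrightarrow> 2 * 0" by (intro tendsto_mult tendsto_const lim)
  then have "setdist {?p} L \<le> 2 * 0" by (rule LIMSEQ_le_const) (use bound in auto)
  then have "infdist ?p L = 0" using setdist_pos_le[of "{?p}" L] by (simp add: infdist_eq_setdist)
  then show "?p \<in> L" using in_closed_iff_infdist_zero[OF compact_imp_closed[OF L(1)] L(2)] by blast
qed

lemma eventually_recurrent:
  fixes H :: "nat \<Rightarrow> 'a"
  assumes "finite F" "\<And>m. H m \<in> F"
  shows "\<exists>N. \<forall>m\<ge>N. infinite {k. H k = H m}"
proof -
  have "{m. finite {k. H k = H m}} = (\<Union>Q\<in>{Q\<in>F. finite {k. H k = Q}}. {k. H k = Q})"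
    using assms(2) by auto
  then have "finite {m. finite {k. H k = H m}}" using assms(1) by (simp add: finite_UN_I)
  then obtain N where "{m. finite {k. H k = H m}} \<subseteq> {..<N}" using finite_nat_bounded by blast
  then have "\<forall>m\<ge>N. infinite {k. H k = H m}" by auto
  then show ?thesis by blast
qed

lemma hausdorff_dist_sym_iter_antimono:
  fixes C L :: "'a::euclidean_space set"
  assumes H: "\<And>k. subspace (H k)" and C: "compact C" "C \<noteq> {}"
    and L: "compact L" "convex L" "L \<noteq> {}"
    and sym: "\<And>j. p \<le> j \<Longrightarrow> j < n \<Longrightarrow> refl_sub (H j) ` L = L" and "p \<le> n"
  shows "hausdorff_dist (sym_iter H n C) L \<le> hausdorff_dist (sym_iter H p C) L"
  using \<open>p \<le> n\<close> sym
proof (induction n rule: dec_induct)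
  case (step j)
  have "hausdorff_dist (sym_iter H (Suc j) C) L
      = hausdorff_dist (minkowski_sym (H j) (sym_iter H j C)) (minkowski_sym (H j) L)"
    using minkowski_sym_symmetric[OF H L(2) step.prems[of j]] step.hyps by simp
  also have "\<dots> \<le> hausdorff_dist (sym_iter H j C) L"
    using C by (intro hausdorff_dist_minkowski_sym_le H compact_sym_iter L(1,3)) auto
  finally show ?case using step by simp
qed simp

lemma finite_uniform_gap:
  fixes g :: "'a \<Rightarrow> real"
  assumes "finite D" "\<And>x. x \<in> D \<Longrightarrow> g x < c"
  shows "\<exists>\<delta>>0. \<forall>x\<in>D. g x \<le> c - \<delta>"
proof (cases "D = {}")
  case False
  then have "Max (g ` D) < c" using assms by simp
  moreover have "g x \<le> Max (g ` D)" if "x \<in> D" for x using assms(1) that by simp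
  ultimately show ?thesis by (intro exI[of _ "c - Max (g ` D)"]) auto
qed (auto intro: exI[of _ 1])

lemma energy_sym_iter_Suc_le:
  fixes C L :: "'a::euclidean_space set"
  assumes H: "\<And>k. subspace (H k)" and C: "compact C" "C \<noteq> {}" "C \<subseteq> cball 0 R"
    and L: "compact L" "convex L" "L \<noteq> {}" "L \<subseteq> cball 0 R"
    and sym: "\<And>j. p \<le> j \<Longrightarrow> j < n \<Longrightarrow> refl_sub (H j) ` L = L" and "p \<le> n"
    and c: "c \<ge> 0" "\<And>A B :: 'a set. A \<in> compact_subsets (cball 0 R) \<Longrightarrow> B \<in> compact_subsets (cball 0 R) \<Longrightarrow>
      energy A \<le> energy B + c * hausdorff_dist A B"
  shows "energy (sym_iter H (Suc n) C)
    \<le> energy (minkowski_sym (H n) L) + c * hausdorff_dist (sym_iter H p C) L"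
proof -
  let ?S = "sym_iter H n C"
  have S: "compact ?S" "?S \<noteq> {}" "?S \<subseteq> cball 0 R"
    using compact_sym_iter[OF H C(1)] sym_iter_subset_cball[OF H C(3)] C(2) by auto
  have "minkowski_sym (H n) ?S \<in> compact_subsets (cball 0 R)"
    "minkowski_sym (H n) L \<in> compact_subsets (cball 0 R)"
    using S L compact_minkowski_sym[OF H] minkowski_sym_subset_cball[OF H]
    by (auto simp: compact_subsets_def)
  from c(2)[OF this]
  have "energy (sym_iter H (Suc n) C)
      \<le> energy (minkowski_sym (H n) L) + c * hausdorff_dist (minkowski_sym (H n) ?S) (minkowski_sym (H n) L)"
    by simp
  also have "\<dots> \<le> energy (minkowski_sym (H n) L) + c * hausdorff_dist ?S L"
    using hausdorff_dist_minkowski_sym_le[OF H S(1,2) L(1,3)] c(1) by (simp add: mult_left_mono)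
  also have "\<dots> \<le> energy (minkowski_sym (H n) L) + c * hausdorff_dist (sym_iter H p C) L"
    using hausdorff_dist_sym_iter_antimono[OF H C(1,2) L(1-3) sym \<open>p \<le> n\<close>] c(1)
    by (simp add: mult_left_mono)
  finally show ?thesis .
qed

lemma energy_sym_iter_antimono:
  assumes H: "\<And>k. subspace (H k)" and C: "compact C" "C \<noteq> {}" and "m \<le> n"
  shows "energy (sym_iter H n C) \<le> energy (sym_iter H m C)"
proof -
  have "energy (sym_iter H (Suc k) C) \<le> energy (sym_iter H k C)" for k
    unfolding sym_iter.simps using C by (intro energy_minkowski_sym_le[OF H compact_sym_iter[OF H]]) simp_all
  then show ?thesis using lift_Suc_antimono_le[of "\<lambda>k. energy (sym_iter H k C)"] \<open>m \<le> n\<close> by blast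
qed

lemma LIMSEQ_subseq_zero_late_less:
  fixes x :: "nat \<Rightarrow> real"
  assumes r: "strict_mono r" and lim: "(\<lambda>k. x (r k)) \<longlonglongrightarrow> 0" and e: "e > 0"
  shows "\<exists>p\<ge>M. x p < e"
proof -
  obtain k0 where "\<forall>k\<ge>k0. norm (x (r k) - 0) < e" using LIMSEQ_D[OF lim e] by blast
  then have "\<bar>x (r (max k0 M))\<bar> < e" by simp
  then have "x (r (max k0 M)) < e" by linarith
  moreover have "M \<le> r (max k0 M)" using seq_suble[OF r, of "max k0 M"] by linarith
  ultimately show ?thesis by blast
qed

lemma ex_almost_minimal:
  fixes f :: "'b \<Rightarrow> real"
  assumes "bdd_below (range f)" "e > 0"
  shows "\<exists>m0. \<forall>m. f m0 < f m + e"
proof -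
  obtain m0 where "f m0 < (INF m. f m) + e"
    using cINF_less_iff[OF UNIV_not_empty assms(1), of "(INF m. f m) + e"] assms(2) by auto
  moreover have "(INF m. f m) \<le> f m" for m by (rule cINF_lower[OF assms(1)]) simp
  ultimately show ?thesis by (meson add_le_cancel_right less_le_trans)
qed

lemma ex_first_after:
  fixes P :: "nat \<Rightarrow> bool"
  assumes "P n0" "p \<le> n0"
  shows "\<exists>n. p \<le> n \<and> P n \<and> (\<forall>j. p \<le> j \<and> j < n \<longrightarrow> \<not> P j)"
proof -
  let ?n = "LEAST n. p \<le> n \<and> P n"
  have "p \<le> ?n \<and> P ?n" using LeastI[of "\<lambda>n. p \<le> n \<and> P n"] assms by blast
  moreover have "\<not> P j" if "p \<le> j" "j < ?n" for j using not_less_Least[OF that(2)] that(1) by blast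
  ultimately show ?thesis by blast
qed

lemma energy_minkowski_sym_gap:
  fixes L :: "'a::euclidean_space set"
  assumes F: "finite F" "\<And>Q. Q \<in> F \<Longrightarrow> subspace Q" and L: "compact L" "convex L" "L \<noteq> {}"
  shows "\<exists>\<delta>>0. \<forall>Q\<in>F. refl_sub Q ` L \<noteq> L \<longrightarrow> energy (minkowski_sym Q L) \<le> energy L - \<delta>"
proof -
  let ?D = "{Q \<in> F. refl_sub Q ` L \<noteq> L}"
  have "energy (minkowski_sym Q L) < energy L" if "Q \<in> ?D" for Q
    using that F(2) by (intro energy_minkowski_sym_less L(1,3,2)) auto
  then have "\<exists>\<delta>>0. \<forall>Q\<in>?D. energy (minkowski_sym Q L) \<le> energy L - \<delta>"
    using F(1) by (intro finite_uniform_gap[where g = "\<lambda>Q. energy (minkowski_sym Q L)"]) auto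
  then show ?thesis by blast
qed

text \<open>If L were not symmetric, some recurring subspace would lower the energy of L by a fixed
  amount; the first such symmetrization after an iterate close to L would then push the energy
  of the iterates below their infimum.\<close>

lemma sym_iter_limit_symmetric:
  fixes C :: "'a::euclidean_space set" and H :: "nat \<Rightarrow> 'a set"
  assumes F: "finite F" "\<And>Q. Q \<in> F \<Longrightarrow> subspace Q" "\<And>m. H m \<in> F"
    and C: "compact C" "C \<noteq> {}" "C \<subseteq> cball 0 R"
    and L: "compact L" "convex L" "L \<noteq> {}" "L \<subseteq> cball 0 R"
    and r: "strict_mono r" and lim: "(\<lambda>k. hausdorff_dist (sym_iter H (r k) C) L) \<longlonglongrightarrow> 0"
    and Q: "Q \<in> F" "infinite {m. H m = Q}"
  shows "refl_sub Q ` L = L"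
proof (rule ccontr)
  assume asym: "refl_sub Q ` L \<noteq> L"
  define S where "S m = sym_iter H m C" for m
  have H: "\<And>k. subspace (H k)" using F by blast
  obtain \<delta> where \<delta>: "\<delta> > 0"
    and gap: "\<And>Q'. Q' \<in> F \<Longrightarrow> refl_sub Q' ` L \<noteq> L \<Longrightarrow> energy (minkowski_sym Q' L) \<le> energy L - \<delta>"
    using energy_minkowski_sym_gap[OF F(1,2) L(1-3)] by blast
  obtain c where c: "c \<ge> 0" "\<And>A B :: 'a set. A \<in> compact_subsets (cball 0 R) \<Longrightarrow>
      B \<in> compact_subsets (cball 0 R) \<Longrightarrow> energy A \<le> energy B + c * hausdorff_dist A B"
    using energy_lipschitz[of R] by blast
  have S: "S m \<in> compact_subsets (cball 0 R)" for m
    using compact_sym_iter[OF H C(1)] sym_iter_subset_cball[OF H C(3)] C(2)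
    by (simp add: S_def compact_subsets_def)
  have "L \<in> compact_subsets (cball 0 R)" using L by (simp add: compact_subsets_def)
  have "bdd_below (range (\<lambda>m. energy (S m)))" using energy_nonneg by (intro bdd_belowI2)
  then obtain m0 where m0: "\<And>m. energy (S m0) < energy (S m) + \<delta>/4"
    using ex_almost_minimal[of "\<lambda>m. energy (S m)" "\<delta>/4"] \<delta> by auto
  have "(\<lambda>k. c * hausdorff_dist (S (r k)) L) \<longlonglongrightarrow> 0"
    using tendsto_mult_right_zero[OF lim, of c] by (simp add: S_def)
  then have "\<exists>p\<ge>m0. c * hausdorff_dist (S p) L < \<delta> / 4"
    using \<delta> by (intro LIMSEQ_subseq_zero_late_less[OF r, where x = "\<lambda>p. c * hausdorff_dist (S p) L"]) auto
  then obtain p where p: "m0 \<le> p" and cd: "c * hausdorff_dist (S p) L < \<delta> / 4" by blast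
  obtain n0 where "p \<le> n0" "H n0 = Q" using Q(2) unfolding infinite_nat_iff_unbounded_le by blast
  then obtain n where n: "p \<le> n" "refl_sub (H n) ` L \<noteq> L"
    and sym: "\<forall>j. p \<le> j \<and> j < n \<longrightarrow> \<not> refl_sub (H j) ` L \<noteq> L"
    using ex_first_after[of "\<lambda>n. refl_sub (H n) ` L \<noteq> L"] asym by blast
  have "energy (S (Suc n)) \<le> energy (minkowski_sym (H n) L) + c * hausdorff_dist (S p) L"
    unfolding S_def using sym by (intro energy_sym_iter_Suc_le[OF H C(1-3) L _ n(1) c]) auto
  also have "\<dots> \<le> energy L - \<delta> + c * hausdorff_dist (S p) L" using gap[OF F(3) n(2)] by simp
  also have "energy L \<le> energy (S p) + c * hausdorff_dist (S p) L"
    using c(2)[OF \<open>L \<in> _\<close> S[of p]] hausdorff_dist_commute[of L "S p"] by simp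
  also have "energy (S p) \<le> energy (S m0)"
    unfolding S_def using p by (intro energy_sym_iter_antimono[OF H C(1,2)])
  finally have "energy (S (Suc n)) < energy (S m0) - \<delta> / 2" using cd by linarith
  then show False using m0[of "Suc n"] \<delta> by linarith
qed

lemma LIMSEQ_zero_subseq_antimono:
  fixes x :: "nat \<Rightarrow> real"
  assumes r: "strict_mono r" and lim: "(\<lambda>k. x (r k)) \<longlonglongrightarrow> 0" and nonneg: "\<And>m. 0 \<le> x m"
    and antimono: "\<And>p m. N \<le> p \<Longrightarrow> p \<le> m \<Longrightarrow> x m \<le> x p"
  shows "x \<longlonglongrightarrow> 0"
proof (rule LIMSEQ_I)
  fix e :: real assume "e > 0"
  then obtain k0 where k0: "\<forall>k\<ge>k0. norm (x (r k) - 0) < e" using lim LIMSEQ_D by blast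
  define p where "p = r (max k0 N)"
  have "N \<le> p" using seq_suble[OF r, of "max k0 N"] by (simp add: p_def)
  moreover have "x p < e" using k0[rule_format, of "max k0 N"] nonneg[of p] by (simp add: p_def)
  ultimately have "norm (x m - 0) < e" if "p \<le> m" for m
    using antimono[OF _ that] nonneg[of m] by simp
  then show "\<exists>p. \<forall>m\<ge>p. norm (x m - 0) < e" by blast
qed

theorem sym_iter_convex_converges:
  fixes C :: "'a::euclidean_space set" and H :: "nat \<Rightarrow> 'a set"
  assumes F: "finite F" "\<And>Q. Q \<in> F \<Longrightarrow> subspace Q" "\<And>m. H m \<in> F"
    and C: "compact C" "convex C" "C \<noteq> {}"
  obtains L where "compact L" "convex L" "L \<noteq> {}" "(\<lambda>m. hausdorff_dist (sym_iter H m C) L) \<longlonglongrightarrow> 0"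
    "\<forall>Q\<in>F. infinite {m. H m = Q} \<longrightarrow> refl_sub Q ` L = L"
proof -
  have H: "\<And>k. subspace (H k)" using F by blast
  obtain R where "\<forall>x\<in>C. norm x \<le> R" using compact_imp_bounded[OF C(1)] unfolding bounded_iff by blast
  then have R: "C \<subseteq> cball 0 R" by auto
  define S where "S m = sym_iter H m C" for m
  have S: "compact (S m)" "S m \<noteq> {}" "S m \<subseteq> cball 0 R" "convex (S m)" for m
    using compact_sym_iter[OF H C(1)] sym_iter_subset_cball[OF H R] convex_sym_iter[OF H C(2)] C(3)
    by (simp_all add: S_def)
  obtain L r where r: "strict_mono r" and L: "compact L" "L \<noteq> {}" "L \<subseteq> cball 0 R"
    and lim: "(\<lambda>k. hausdorff_dist (S (r k)) L) \<longlonglongrightarrow> 0"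
    by (rule blaschke_selection[OF compact_cball S(1,2,3)])
  have "convex L" using convex_hausdorff_limit[of "\<lambda>k. S (r k)"] S L lim by blast
  have sym: "refl_sub Q ` L = L" if "Q \<in> F" "infinite {m. H m = Q}" for Q
    using sym_iter_limit_symmetric[OF F C(1,3) R L(1) \<open>convex L\<close> L(2,3) r _ that] lim
    by (simp add: S_def)
  obtain N where N: "\<And>m. N \<le> m \<Longrightarrow> infinite {k. H k = H m}"
    using eventually_recurrent[of F H, OF F(1,3)] by blast
  have "(\<lambda>m. hausdorff_dist (S m) L) \<longlonglongrightarrow> 0"
  proof (rule LIMSEQ_zero_subseq_antimono[OF r lim])
    show "0 \<le> hausdorff_dist (S m) L" for m
      using S L by (intro hausdorff_dist_nonneg compact_imp_bounded)
    show "hausdorff_dist (S m) L \<le> hausdorff_dist (S p) L" if "N \<le> p" "p \<le> m" for p m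
      unfolding S_def using sym[OF F(3) N] that
      by (intro hausdorff_dist_sym_iter_antimono[OF H C(1,3) L(1) \<open>convex L\<close> L(2)]) auto
  qed
  then show ?thesis using that L \<open>convex L\<close> sym by (simp add: S_def)
qed

section \<open>Nonconvex sets\<close>

definition mean_variance_le :: "'a::real_inner set \<Rightarrow> 'a \<Rightarrow> real \<Rightarrow> bool" where
  "mean_variance_le A x v \<longleftrightarrow> (\<exists>S w. finite S \<and> S \<subseteq> A \<and> (\<forall>s\<in>S. 0 \<le> w s) \<and> sum w S = 1 \<and>
     (\<Sum>s\<in>S. w s *\<^sub>R s) = x \<and> (\<Sum>s\<in>S. w s * (norm (s - x))\<^sup>2) \<le> v)"

lemma mean_variance_leI:
  fixes f :: "'p \<Rightarrow> 'a::real_inner"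
  assumes P: "finite P" "f ` P \<subseteq> A" "\<And>p. p \<in> P \<Longrightarrow> 0 \<le> c p" "sum c P = 1"
    and mean: "(\<Sum>p\<in>P. c p *\<^sub>R f p) = x" and var: "(\<Sum>p\<in>P. c p * (norm (f p - x))\<^sup>2) \<le> v"
  shows "mean_variance_le A x v"
proof -
  define w where "w z = (\<Sum>p\<in>{p\<in>P. f p = z}. c p)" for z
  have push: "(\<Sum>z\<in>f ` P. w z *\<^sub>R g z) = (\<Sum>p\<in>P. c p *\<^sub>R g (f p))" for g :: "'a \<Rightarrow> 'b::real_vector"
  proof -
    have "(\<Sum>p\<in>P. c p *\<^sub>R g (f p)) = (\<Sum>z\<in>f ` P. \<Sum>p\<in>{p\<in>P. f p = z}. c p *\<^sub>R g (f p))"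
      by (rule sum.image_gen[OF P(1)])
    also have "\<dots> = (\<Sum>z\<in>f ` P. w z *\<^sub>R g z)"
      unfolding w_def scaleR_sum_left by (intro sum.cong refl) auto
    finally show ?thesis by simp
  qed
  have "sum w (f ` P) = 1" using push[of "\<lambda>_. 1::real"] P(4) by simp
  moreover have "(\<Sum>z\<in>f ` P. w z *\<^sub>R z) = x" using push[of "\<lambda>z. z"] mean by simp
  moreover have "(\<Sum>z\<in>f ` P. w z * (norm (z - x))\<^sup>2) \<le> v"
    using push[of "\<lambda>z. (norm (z - x))\<^sup>2"] var by simp
  moreover have "\<forall>z\<in>f ` P. 0 \<le> w z" using P(3) by (auto simp: w_def intro: sum_nonneg)
  ultimately show ?thesis unfolding mean_variance_le_def using P(1,2) by blast
qed

lemma double_sum_weighted_split: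
  fixes u z :: "'b \<Rightarrow> 'a::real_inner"
  shows "(\<Sum>s\<in>S. \<Sum>t\<in>T. w s * v t * (g s + h t + u s \<bullet> z t))
    = sum v T * (\<Sum>s\<in>S. w s * g s) + sum w S * (\<Sum>t\<in>T. v t * h t)
      + (\<Sum>s\<in>S. w s *\<^sub>R u s) \<bullet> (\<Sum>t\<in>T. v t *\<^sub>R z t)"
proof -
  have "(\<Sum>s\<in>S. \<Sum>t\<in>T. w s * v t * (g s + h t + u s \<bullet> z t))
      = (\<Sum>s\<in>S. \<Sum>t\<in>T. v t * (w s * g s)) + (\<Sum>s\<in>S. \<Sum>t\<in>T. w s * (v t * h t))
        + (\<Sum>s\<in>S. \<Sum>t\<in>T. (w s *\<^sub>R u s) \<bullet> (v t *\<^sub>R z t))"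
    by (simp add: sum.distrib algebra_simps)
  then show ?thesis
    by (simp add: sum_distrib_left sum_distrib_right inner_sum_left inner_sum_right sum.swap[of _ S T]
        mult.commute)
qed

lemma weighted_sum_centered:
  fixes a :: "'a::real_vector"
  assumes "sum w S = 1" "(\<Sum>s\<in>S. w s *\<^sub>R s) = a"
  shows "(\<Sum>s\<in>S. w s *\<^sub>R (s - a)) = 0"
  using assms by (simp add: scaleR_diff_right sum_subtractf flip: scaleR_sum_left)

lemma midpoint_product_centered:
  fixes R :: "'a::real_vector \<Rightarrow> 'a"
  assumes R: "linear R" and a: "(\<Sum>s\<in>S. w s *\<^sub>R (s - a)) = 0" and b: "(\<Sum>t\<in>T. v t *\<^sub>R (t - b)) = 0"
  shows "(\<Sum>s\<in>S. \<Sum>t\<in>T. (w s * v t) *\<^sub>R ((s - a) + R (t - b))) = 0"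
proof -
  have "(\<Sum>t\<in>T. v t *\<^sub>R R (t - b)) = R (\<Sum>t\<in>T. v t *\<^sub>R (t - b))"
    using R by (simp add: linear_sum linear_scale)
  then have Rb: "(\<Sum>t\<in>T. v t *\<^sub>R R (t - b)) = 0" using b R by (simp add: linear_0)
  have "(\<Sum>s\<in>S. \<Sum>t\<in>T. (w s * v t) *\<^sub>R ((s - a) + R (t - b)))
      = (\<Sum>t\<in>T. v t *\<^sub>R (\<Sum>s\<in>S. w s *\<^sub>R (s - a))) + (\<Sum>s\<in>S. w s *\<^sub>R (\<Sum>t\<in>T. v t *\<^sub>R R (t - b)))"
    by (simp add: scaleR_add_right sum.distrib scaleR_sum_right sum.swap[of _ S T] mult.commute)
  then show ?thesis using a Rb by simp
qed

text \<open>The midpoint of two independent random points has variance the sum of their variances,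
  since the cross term vanishes.\<close>

lemma midpoint_product_variance:
  fixes R :: "'a::real_inner \<Rightarrow> 'a"
  assumes R: "\<And>x. norm (R x) = norm x" and w: "sum w S = 1" and v: "sum v T = 1"
    and a: "(\<Sum>s\<in>S. w s *\<^sub>R (s - a)) = 0"
  shows "(\<Sum>s\<in>S. \<Sum>t\<in>T. w s * v t * (norm ((s - a) + R (t - b)))\<^sup>2)
    = (\<Sum>s\<in>S. w s * (norm (s - a))\<^sup>2) + (\<Sum>t\<in>T. v t * (norm (t - b))\<^sup>2)"
proof -
  have sq: "(norm ((s - a) + R (t - b)))\<^sup>2
      = (norm (s - a))\<^sup>2 + (norm (t - b))\<^sup>2 + (2 *\<^sub>R (s - a)) \<bullet> R (t - b)" for s t
    using dot_norm[of "s - a" "R (t - b)"] R by simp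
  have "(\<Sum>s\<in>S. w s *\<^sub>R (2 *\<^sub>R (s - a))) = 2 *\<^sub>R (\<Sum>s\<in>S. w s *\<^sub>R (s - a))"
    by (simp add: scaleR_sum_right mult.commute)
  then show ?thesis
    unfolding sq double_sum_weighted_split using w v a by simp
qed

lemma mean_variance_le_minkowski_sym:
  fixes A :: "'a::euclidean_space set"
  assumes Q: "subspace Q" and "mean_variance_le A a \<alpha>" "mean_variance_le A b \<beta>"
  shows "mean_variance_le (minkowski_sym Q A) ((1/2::real) *\<^sub>R (a + refl_sub Q b)) ((\<alpha> + \<beta>) / 4)"
proof -
  obtain S w where S: "finite S" "S \<subseteq> A" "\<forall>s\<in>S. 0 \<le> w s" "sum w S = 1" "(\<Sum>s\<in>S. w s *\<^sub>R s) = a"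
    "(\<Sum>s\<in>S. w s * (norm (s - a))\<^sup>2) \<le> \<alpha>"
    using assms(2) unfolding mean_variance_le_def by blast
  obtain T v where T: "finite T" "T \<subseteq> A" "\<forall>t\<in>T. 0 \<le> v t" "sum v T = 1" "(\<Sum>t\<in>T. v t *\<^sub>R t) = b"
    "(\<Sum>t\<in>T. v t * (norm (t - b))\<^sup>2) \<le> \<beta>"
    using assms(3) unfolding mean_variance_le_def by blast
  define x where "x = (1/2::real) *\<^sub>R (a + refl_sub Q b)"
  define f where "f p = (1/2::real) *\<^sub>R (fst p + refl_sub Q (snd p))" for p
  define c where "c p = w (fst p) * v (snd p)" for p
  have centered: "f (s, t) - x = (1/2::real) *\<^sub>R ((s - a) + refl_sub Q (t - b))" for s t
    using linear_refl_sub[OF Q] by (simp add: f_def x_def linear_diff algebra_simps)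
  have a: "(\<Sum>s\<in>S. w s *\<^sub>R (s - a)) = 0" by (rule weighted_sum_centered[OF S(4,5)])
  have b: "(\<Sum>t\<in>T. v t *\<^sub>R (t - b)) = 0" by (rule weighted_sum_centered[OF T(4,5)])
  have split: "(\<Sum>p\<in>S \<times> T. g p) = (\<Sum>s\<in>S. \<Sum>t\<in>T. g (s, t))" for g :: "'a \<times> 'a \<Rightarrow> 'b::comm_monoid_add"
    by (simp add: sum.cartesian_product)
  have sum_c: "sum c (S \<times> T) = 1"
    using S(4) T(4) by (simp add: split c_def sum_product[symmetric])
  have "(\<Sum>p\<in>S \<times> T. c p *\<^sub>R (f p - x))
      = (1/2::real) *\<^sub>R (\<Sum>s\<in>S. \<Sum>t\<in>T. (w s * v t) *\<^sub>R ((s - a) + refl_sub Q (t - b)))"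
    by (simp add: split c_def centered scaleR_sum_right)
  also have "\<dots> = 0" using midpoint_product_centered[OF linear_refl_sub[OF Q] a b] by simp
  finally have "(\<Sum>p\<in>S \<times> T. c p *\<^sub>R f p) = x"
    using sum_c by (simp add: scaleR_diff_right sum_subtractf flip: scaleR_sum_left)
  moreover have "(\<Sum>p\<in>S \<times> T. c p * (norm (f p - x))\<^sup>2)
      = (\<Sum>s\<in>S. \<Sum>t\<in>T. w s * v t * (norm ((s - a) + refl_sub Q (t - b)))\<^sup>2) / 4"
    by (simp add: split c_def centered sum_divide_distrib power2_eq_square)
  then have "(\<Sum>p\<in>S \<times> T. c p * (norm (f p - x))\<^sup>2) \<le> (\<alpha> + \<beta>) / 4"
    using midpoint_product_variance[OF norm_refl_sub[OF Q] S(4) T(4) a] S(6) T(6) by simp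
  moreover have "f p \<in> minkowski_sym Q A" if "p \<in> S \<times> T" for p
    unfolding mem_minkowski_sym f_def using that S(2) T(2)
    by (intro bexI[of _ "fst p"] bexI[of _ "snd p"]) auto
  ultimately show ?thesis
    unfolding x_def[symmetric] using S(1,3) T(1,3)
    by (intro mean_variance_leI[where c = c and f = f and P = "S \<times> T"] sum_c) (auto simp: c_def)
qed

lemma mean_variance_le_near:
  assumes "mean_variance_le A x v"
  obtains s where "s \<in> A" "(norm (s - x))\<^sup>2 \<le> v"
proof -
  obtain S w where S: "finite S" "S \<subseteq> A" "\<forall>s\<in>S. 0 \<le> w s" "sum w S = 1"
    "(\<Sum>s\<in>S. w s * (norm (s - x))\<^sup>2) \<le> v"
    using assms unfolding mean_variance_le_def by blast
  have "S \<noteq> {}" using S(4) by auto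
  then obtain s0 where s0: "s0 \<in> S" "\<And>s. s \<in> S \<Longrightarrow> (norm (s0 - x))\<^sup>2 \<le> (norm (s - x))\<^sup>2"
    using arg_min_if_finite[OF S(1) \<open>S \<noteq> {}\<close>, of "\<lambda>s. (norm (s - x))\<^sup>2"] by (meson not_le)
  have "(norm (s0 - x))\<^sup>2 = (\<Sum>s\<in>S. w s * (norm (s0 - x))\<^sup>2)" using S(4) by (simp flip: sum_distrib_right)
  also have "\<dots> \<le> (\<Sum>s\<in>S. w s * (norm (s - x))\<^sup>2)"
    using S(3) s0(2) by (intro sum_mono mult_left_mono) auto
  finally show ?thesis using that s0(1) S(2,5) by fastforce
qed

lemma mean_variance_le_convex_hull:
  fixes K :: "'a::real_inner set"
  assumes K: "K \<subseteq> cball 0 R" and x: "x \<in> convex hull K"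
  shows "mean_variance_le K x (4 * R\<^sup>2)"
proof -
  obtain S u where S: "finite S" "S \<subseteq> K" "\<forall>s\<in>S. 0 \<le> u s" "sum u S = 1" "(\<Sum>s\<in>S. u s *\<^sub>R s) = x"
    using x unfolding convex_hull_explicit by blast
  have "norm x \<le> R" using x hull_minimal[of K "cball 0 R" convex, OF K convex_cball] by auto
  then have "(norm (s - x))\<^sup>2 \<le> 4 * R\<^sup>2" if "s \<in> S" for s
  proof -
    have "norm s \<le> R" using that S(2) K by auto
    then have "norm (s - x) \<le> 2 * R" using \<open>norm x \<le> R\<close> norm_triangle_ineq4[of s x] by simp
    then show ?thesis using power_mono[of "norm (s - x)" "2 * R" 2] by (simp add: power_mult_distrib)
  qed
  then have "(\<Sum>s\<in>S. u s * (norm (s - x))\<^sup>2) \<le> (\<Sum>s\<in>S. u s * (4 * R\<^sup>2))"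
    using S(3) by (intro sum_mono mult_left_mono) auto
  also have "\<dots> = 4 * R\<^sup>2" using S(4) by (simp flip: sum_distrib_right)
  finally show ?thesis unfolding mean_variance_le_def using S by blast
qed

lemma sym_iter_convex_hull_mean_variance_le:
  fixes K :: "'a::euclidean_space set"
  assumes H: "\<And>k. subspace (H k)" and K: "K \<subseteq> cball 0 R" and x: "x \<in> sym_iter H m (convex hull K)"
  shows "mean_variance_le (sym_iter H m K) x (4 * R\<^sup>2 / 2 ^ m)"
  using x
proof (induction m arbitrary: x)
  case 0
  then show ?case using mean_variance_le_convex_hull[OF K] by simp
next
  case (Suc m)
  then obtain a b where ab: "a \<in> sym_iter H m (convex hull K)" "b \<in> sym_iter H m (convex hull K)"
    "x = (1/2::real) *\<^sub>R (a + refl_sub (H m) b)"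
    by (auto simp: mem_minkowski_sym)
  have "mean_variance_le (sym_iter H (Suc m) K) x ((4 * R\<^sup>2 / 2 ^ m + 4 * R\<^sup>2 / 2 ^ m) / 4)"
    using mean_variance_le_minkowski_sym[OF H Suc.IH[OF ab(1)] Suc.IH[OF ab(2)]] ab(3) by simp
  moreover have "(4 * R\<^sup>2 / 2 ^ m + 4 * R\<^sup>2 / 2 ^ m) / 4 = 4 * R\<^sup>2 / 2 ^ Suc m"
    by (simp add: divide_simps)
  ultimately show ?case by simp
qed

lemma hausdorff_dist_sym_iter_convex_hull:
  fixes K :: "'a::euclidean_space set"
  assumes H: "\<And>k. subspace (H k)" and K: "compact K" "K \<noteq> {}" "K \<subseteq> cball 0 R"
  shows "hausdorff_dist (sym_iter H m K) (sym_iter H m (convex hull K)) \<le> sqrt (4 * R\<^sup>2 / 2 ^ m)"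
proof (rule hausdorff_distI)
  show "bounded (sym_iter H m K)" "bounded (sym_iter H m (convex hull K))"
    using compact_sym_iter[OF H K(1)] compact_sym_iter[OF H compact_convex_hull[OF K(1)]]
    by (simp_all add: compact_imp_bounded)
  show "sym_iter H m K \<noteq> {}" "sym_iter H m (convex hull K) \<noteq> {}" using K(2) by simp_all
  show "setdist {x} (sym_iter H m (convex hull K)) \<le> sqrt (4 * R\<^sup>2 / 2 ^ m)"
    if "x \<in> sym_iter H m K" for x
  proof -
    have "x \<in> sym_iter H m (convex hull K)" using that sym_iter_mono[OF hull_subset] by blast
    then show ?thesis by (simp add: setdist_eq_0I)
  qed
  show "setdist {y} (sym_iter H m K) \<le> sqrt (4 * R\<^sup>2 / 2 ^ m)"
    if y: "y \<in> sym_iter H m (convex hull K)" for y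
  proof -
    obtain s where s: "s \<in> sym_iter H m K" "(norm (s - y))\<^sup>2 \<le> 4 * R\<^sup>2 / 2 ^ m"
      using mean_variance_le_near[OF sym_iter_convex_hull_mean_variance_le[OF H K(3) y]] .
    have "setdist {y} (sym_iter H m K) \<le> dist y s" using s(1) by (simp add: setdist_le_dist)
    also have "\<dots> \<le> sqrt (4 * R\<^sup>2 / 2 ^ m)"
      using s(2) by (simp add: dist_norm norm_minus_commute real_le_rsqrt)
    finally show ?thesis .
  qed
qed

lemma sym_iter_convex_hull_close:
  fixes K :: "'a::euclidean_space set"
  assumes H: "\<And>k. subspace (H k)" and K: "compact K" "K \<noteq> {}"
  shows "(\<lambda>m. hausdorff_dist (sym_iter H m K) (sym_iter H m (convex hull K))) \<longlonglongrightarrow> 0"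
proof -
  obtain R where "\<forall>x\<in>K. norm x \<le> R" using compact_imp_bounded[OF K(1)] unfolding bounded_iff by blast
  then have R: "K \<subseteq> cball 0 R" by auto
  have "(\<lambda>m. 4 * R\<^sup>2 * (1/2) ^ m) \<longlonglongrightarrow> 4 * R\<^sup>2 * 0"
    by (intro tendsto_mult tendsto_const LIMSEQ_realpow_zero) auto
  then have "(\<lambda>m. 4 * R\<^sup>2 / 2 ^ m) \<longlonglongrightarrow> 0" by (simp add: power_one_over)
  from tendsto_real_sqrt[OF this] have lim: "(\<lambda>m. sqrt (4 * R\<^sup>2 / 2 ^ m)) \<longlonglongrightarrow> 0" by simp
  have "0 \<le> hausdorff_dist (sym_iter H m K) (sym_iter H m (convex hull K))" for m
    using compact_sym_iter[OF H K(1)] K(2) by (intro hausdorff_dist_nonneg compact_imp_bounded) simp_all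
  then have "\<forall>\<^sub>F m in sequentially. 0 \<le> hausdorff_dist (sym_iter H m K) (sym_iter H m (convex hull K))"
    by (intro always_eventually) blast
  moreover have "\<forall>\<^sub>F m in sequentially.
      hausdorff_dist (sym_iter H m K) (sym_iter H m (convex hull K)) \<le> sqrt (4 * R\<^sup>2 / 2 ^ m)"
    using hausdorff_dist_sym_iter_convex_hull[where H = H, OF H K R] by (intro always_eventually) blast
  ultimately show ?thesis by (rule tendsto_sandwich[OF _ _ tendsto_const lim])
qed

theorem corollary10:
  fixes K :: "'a::euclidean_space set"
    and F :: "'a set set"
    and H :: "nat \<Rightarrow> 'a set"
    and i :: nat
  assumes "compact K" and "K \<noteq> {}"
    and "finite F"
    and "\<And>Q. Q \<in> F \<Longrightarrow> subspace Q \<and> dim Q = i"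
    and "1 \<le> i" and "i \<le> DIM('a) - 1"
    and "\<And>m. H m \<in> F"
  shows "\<exists>L. compact L \<and> convex L \<and> L \<noteq> {} \<and>
           (\<lambda>m. hausdorff_dist (sym_iter H m K) L) \<longlonglongrightarrow> 0 \<and>
           (\<lambda>m. hausdorff_dist (sym_iter H m (convex hull K)) L) \<longlonglongrightarrow> 0 \<and>
           (\<forall>Q\<in>F. infinite {m. H m = Q} \<longrightarrow> refl_sub Q ` L = L)"
proof -
  have F: "\<And>Q. Q \<in> F \<Longrightarrow> subspace Q" using assms(4) by blast
  then have H: "\<And>k. subspace (H k)" using assms(7) by blast
  have hull: "compact (convex hull K)" "convex (convex hull K)" "convex hull K \<noteq> {}"
    using compact_convex_hull[OF assms(1)] assms(2) by simp_all
  obtain L where L: "compact L" "convex L" "L \<noteq> {}"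
    and lim: "(\<lambda>m. hausdorff_dist (sym_iter H m (convex hull K)) L) \<longlonglongrightarrow> 0"
    and sym: "\<forall>Q\<in>F. infinite {m. H m = Q} \<longrightarrow> refl_sub Q ` L = L"
    by (rule sym_iter_convex_converges[OF assms(3) F assms(7) hull])
  have "(\<lambda>m. hausdorff_dist (sym_iter H m K) L) \<longlonglongrightarrow> 0"
    using compact_sym_iter[OF H] assms(1,2) hull L
    by (intro hausdorff_dist_tendsto_trans[OF _ _ _ _ _ _ sym_iter_convex_hull_close[OF H assms(1,2)] lim])
      (simp_all add: compact_imp_bounded)
  with L lim sym show ?thesis by blast
qed

end
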